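(* Let $q=p^f$ with $p$ prime, and let $\mathbf{A}\in\mathrm{GL}_n(q)$, $n=q+1$, be the matrix defined in the context. Assume that $n=q+1=2^sr^t$ for some odd prime $r$ and integers $s,t\geqslant 0$. Then there exists a faithful $\langle\mathbf{A}\rangle$-irreducible linear $[n,2]_q$ code. If $q$ is a Mersenne prime, then $\mathbb{F}_q^n$ is a direct sum of faithful $\langle\mathbf{A}\rangle$-irreducible linear $[n,2]_q$ codes.
   Context: A linear $[n,k]_q$ code is a $k$-dimensional subspace of the row space $\mathbb{F}_q^n$. Write the multiplicative group $\mathbb{F}_q^*=\langle\eta,\lambda\rangle$ where $\lambda$ has odd order and $\eta$ has order a power of $2$. Let $\mathbf{D}=\mathrm{diag}(\eta\lambda,\lambda,\eta\lambda,\ldots,\eta\lambda)$ ($n\times n$; first entry $\eta\lambda$, second entry $\lambda$, remaining $n-2$ entries $\eta\lambda$), $\mathbf{P}=\begin{pmatrix}\mathbf{0}' & \mathbf{I}_{n-1}\\ 1 & \mathbf{0}\end{pmatrix}$ (with $\mathbf{0}'$ the zero column of length $n-1$, $\mathbf{0}$ the zero row of length $n-1$), and $\mathbf{A}=\mathbf{D}\mathbf{P}$, acting on $\mathbb{F}_q^n$ by right multiplication. A code $\mathcal{C}$ is $\langle\mathbf{A}\rangle$-invariant if $\mathcal{C}\mathbf{A}\subseteq\mathcal{C}$; an $\langle\mathbf{A}\rangle$-invariant $[n,k]_q$ code is $\langle\mathbf{A}\rangle$-irreducible if it contains no $\langle\mathbf{A}\rangle$-invariant $[n,k']_q$ code with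 $1\leqslant k'<k$, and faithful if no nonidentity element of $\langle\mathbf{A}\rangle$ fixes it pointwise. *)

theory Defs
  imports Complex_Main "HOL-Library.Function_Algebras" "HOL-Library.Cardinality" "HOL-Computational_Algebra.Primes"
begin

(* Row vectors of length n over a field 'a: functions nat => 'a vanishing outside {0..<n}.
   Indices are 0-based: coordinate i (0-based) is coordinate i+1 of the paper. *)

definition vscale :: "'a::field \<Rightarrow> (nat \<Rightarrow> 'a) \<Rightarrow> nat \<Rightarrow> 'a" where
  "vscale c v = (\<lambda>i. c * v i)"

definition Fn :: "nat \<Rightarrow> (nat \<Rightarrow> 'a::zero) set" where
  "Fn n = {v. \<forall>i\<ge>n. v i = 0}"

(* n x n matrices as functions nat => nat => 'a; only entries with indices < n matter *)
definition mat_mul :: "nat \<Rightarrow> (nat \<Rightarrow> nat \<Rightarrow> 'a::semiring_0) \<Rightarrow> (nat \<Rightarrow> nat \<Rightarrow> 'a) \<Rightarrow> nat \<Rightarrow> nat \<Rightarrow> 'a" where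
  "mat_mul n M N = (\<lambda>i j. \<Sum>k<n. M i k * N k j)"

definition id_mat :: "nat \<Rightarrow> nat \<Rightarrow> 'a::{zero,one}" where
  "id_mat = (\<lambda>i j. if i = j then 1 else 0)"

primrec mat_pow :: "nat \<Rightarrow> (nat \<Rightarrow> nat \<Rightarrow> 'a::semiring_1) \<Rightarrow> nat \<Rightarrow> nat \<Rightarrow> nat \<Rightarrow> 'a" where
  "mat_pow n M 0 = id_mat"
| "mat_pow n M (Suc m) = mat_mul n (mat_pow n M m) M"

definition row_act :: "nat \<Rightarrow> (nat \<Rightarrow> 'a::semiring_0) \<Rightarrow> (nat \<Rightarrow> nat \<Rightarrow> 'a) \<Rightarrow> nat \<Rightarrow> 'a" where
  "row_act n v M = (\<lambda>j. if j < n then (\<Sum>i<n. v i * M i j) else 0)"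

definition mult_ord :: "'a::monoid_mult \<Rightarrow> nat" where
  "mult_ord x = (LEAST m. 0 < m \<and> x ^ m = 1)"

(* D = diag(eta*lam, lam, eta*lam, ..., eta*lam)  (0-based: entry 1 is lam) *)
definition matD :: "nat \<Rightarrow> 'a::field \<Rightarrow> 'a \<Rightarrow> nat \<Rightarrow> nat \<Rightarrow> 'a" where
  "matD n eta lam = (\<lambda>i j. if i = j \<and> i < n then (if i = 1 then lam else eta * lam) else 0)"

(* P = [[0', I_{n-1}], [1, 0]]: P_{i,i+1} = 1 for i < n-1, P_{n-1,0} = 1 (0-based) *)
definition matP :: "nat \<Rightarrow> nat \<Rightarrow> nat \<Rightarrow> 'a::{zero,one}" where
  "matP n = (\<lambda>i j. if i < n \<and> j < n \<and> j = (i + 1) mod n then 1 else 0)"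

definition matA :: "nat \<Rightarrow> 'a::field \<Rightarrow> 'a \<Rightarrow> nat \<Rightarrow> nat \<Rightarrow> 'a" where
  "matA n eta lam = mat_mul n (matD n eta lam) (matP n)"

definition lin_code :: "nat \<Rightarrow> nat \<Rightarrow> (nat \<Rightarrow> 'a::field) set \<Rightarrow> bool" where
  "lin_code n k C \<longleftrightarrow> C \<subseteq> Fn n \<and> module.subspace vscale C \<and> vector_space.dim vscale C = k"

definition invariant_code :: "nat \<Rightarrow> (nat \<Rightarrow> nat \<Rightarrow> 'a::field) \<Rightarrow> (nat \<Rightarrow> 'a) set \<Rightarrow> bool" where
  "invariant_code n M C \<longleftrightarrow> (\<forall>v\<in>C. row_act n v M \<in> C)"

definition irreducible_code :: "nat \<Rightarrow> nat \<Rightarrow> (nat \<Rightarrow> nat \<Rightarrow> 'a::field) \<Rightarrow> (nat \<Rightarrow> 'a) set \<Rightarrow> bool" where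
  "irreducible_code n k M C \<longleftrightarrow> lin_code n k C \<and> invariant_code n M C \<and>
     \<not> (\<exists>C' k'. 1 \<le> k' \<and> k' < k \<and> lin_code n k' C' \<and> invariant_code n M C' \<and> C' \<subseteq> C)"

definition faithful_code :: "nat \<Rightarrow> (nat \<Rightarrow> nat \<Rightarrow> 'a::field) \<Rightarrow> (nat \<Rightarrow> 'a) set \<Rightarrow> bool" where
  "faithful_code n M C \<longleftrightarrow> (\<forall>m. (\<forall>v\<in>C. row_act n v (mat_pow n M m) = v) \<longrightarrow>
      (\<forall>i<n. \<forall>j<n. mat_pow n M m i j = id_mat i j))"

end

theory Submission
  imports Defs "HOL-Algebra.Algebraic_Closure_Type"
begin

text \<open>Let \<open>E\<close> be the quadratic extension of \<open>F = GF(q)\<close>. Since \<open>A^(q + 1)\<close> is the scalar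
  \<open>c = \<eta>^q \<lambda>^(q + 1)\<close>, every \<open>\<gamma> \<in> E\<close> with \<open>\<gamma>^(q + 1) = c\<close> gives an \<open>F\<close>-linear injection
  \<open>E \<rightarrow> F^n\<close> turning multiplication by \<open>\<gamma>\<close> into right multiplication by \<open>A\<close>. Its image is a
  2-dimensional invariant code, irreducible because \<open>\<gamma> \<notin> F\<close> and faithful when \<open>\<gamma>\<close> generates
  \<open>E\<^sup>*\<close>.

  The hypotheses on \<open>\<eta>, \<lambda>\<close> make \<open>c\<close> a generator of \<open>F\<^sup>*\<close>, so \<open>c = g^((q + 1) j)\<close> for a
  generator \<open>g\<close> of \<open>E\<^sup>*\<close> and some \<open>j\<close> coprime to \<open>q - 1\<close>. Each \<open>g^(j + (q - 1) u)\<close> is again a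
  \<open>(q + 1)\<close>-th root of \<open>c\<close>, and it generates \<open>E\<^sup>*\<close> once its exponent is coprime to \<open>q + 1\<close>:
  for \<open>q + 1 = 2^s r^t\<close> one of \<open>u = 0, 1\<close> works, and for \<open>q + 1 = 2^m\<close> every \<open>u\<close> does. In the
  latter case these \<open>q + 1\<close> roots are distinct; keeping one from each conjugate pair leaves at least
  \<open>(q + 1)/2\<close> codes, which are independent because \<open>A\<^sup>2 - tr(\<delta>) A + N(\<delta>)\<close> kills the code
  of \<open>\<delta>\<close> and is injective on the others, so by counting they exhaust \<open>F^n\<close>.\<close>

\<comment> \<open>Otherwise HOL-Algebra's \<open>prime\<close> on monoids would shadow \<open>prime\<close> on numbers.\<close>
hide_const (open) Divisibility.prime

section \<open>Weighted cyclic shifts\<close>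

interpretation VS: vector_space "vscale :: 'a::field \<Rightarrow> (nat \<Rightarrow> 'a) \<Rightarrow> nat \<Rightarrow> 'a"
  by unfold_locales (simp_all add: vscale_def fun_eq_iff algebra_simps)

interpretation row_act: Vector_Spaces.linear vscale vscale "\<lambda>v. row_act n v M"
  for n and M :: "nat \<Rightarrow> nat \<Rightarrow> 'a::field"
  by unfold_locales
    (simp_all add: row_act_def vscale_def fun_eq_iff sum.distrib sum_distrib_left algebra_simps)

lemma Fn_subspace: "VS.subspace (Fn n :: (nat \<Rightarrow> 'a::field) set)"
  by (rule VS.subspaceI) (auto simp: Fn_def vscale_def)

lemma row_act_in_Fn: "row_act n v M \<in> Fn n"
  by (simp add: Fn_def row_act_def)

lemma row_act_mat_mul:
  assumes "v \<in> Fn n"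
  shows "row_act n v (mat_mul n M N) = row_act n (row_act n v M) N"
proof
  fix j
  show "row_act n v (mat_mul n M N) j = row_act n (row_act n v M) N j"
  proof (cases "j < n")
    case True
    have "row_act n v (mat_mul n M N) j = (\<Sum>i<n. \<Sum>k<n. v i * M i k * N k j)"
      using True by (simp add: row_act_def mat_mul_def sum_distrib_left mult.assoc)
    also have "\<dots> = (\<Sum>k<n. \<Sum>i<n. v i * M i k * N k j)"
      by (rule sum.swap)
    also have "\<dots> = row_act n (row_act n v M) N j"
      using True by (simp add: row_act_def sum_distrib_right)
    finally show ?thesis .
  qed (simp add: row_act_def)
qed

lemma row_act_id_mat:
  fixes v :: "nat \<Rightarrow> 'a::semiring_1"
  assumes "v \<in> Fn n"
  shows "row_act n v id_mat = v"
proof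
  fix j
  have "(\<Sum>i<n. v i * id_mat i j) = (\<Sum>i<n. if i = j then v j else 0)"
    by (rule sum.cong) (auto simp: id_mat_def)
  then show "row_act n v id_mat j = v j"
    using assms by (simp add: row_act_def Fn_def)
qed

lemma row_act_mat_pow_add:
  fixes M :: "nat \<Rightarrow> nat \<Rightarrow> 'a::semiring_1"
  assumes "v \<in> Fn n"
  shows "row_act n v (mat_pow n M (a + b)) = row_act n (row_act n v (mat_pow n M a)) (mat_pow n M b)"
proof (induction b)
  case 0
  show ?case by (simp add: row_act_id_mat row_act_in_Fn)
next
  case (Suc b)
  then show ?case by (simp add: row_act_mat_mul assms row_act_in_Fn)
qed

lemma id_mat_if_row_act_fixes:
  fixes N :: "nat \<Rightarrow> nat \<Rightarrow> 'a::field"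
  assumes N_id: "\<And>v. v \<in> Fn n \<Longrightarrow> row_act n v N = v" and "i < n" "j < n"
  shows "N i j = id_mat i j"
proof -
  let ?e = "\<lambda>k. if k = i then 1 else 0 :: 'a"
  have "?e \<in> Fn n" using \<open>i < n\<close> by (simp add: Fn_def)
  have "(\<Sum>k<n. ?e k * N k j) = (\<Sum>k<n. if k = i then N i j else 0)"
    by (rule sum.cong) auto
  then have "N i j = row_act n ?e N j"
    using assms(2,3) by (simp add: row_act_def)
  also have "\<dots> = ?e j" using N_id[OF \<open>?e \<in> Fn n\<close>] by simp
  finally show ?thesis by (simp add: id_mat_def)
qed

definition shift_mat :: "nat \<Rightarrow> (nat \<Rightarrow> 'a::zero) \<Rightarrow> nat \<Rightarrow> nat \<Rightarrow> 'a" where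
  "shift_mat n d = (\<lambda>i j. if i < n \<and> j < n \<and> j = Suc i mod n then d i else 0)"

definition matD_diag :: "'a::field \<Rightarrow> 'a \<Rightarrow> nat \<Rightarrow> 'a" where
  "matD_diag eta lam i = (if i = 1 then lam else eta * lam)"

lemma matA_eq_shift_mat: "matA n eta lam = shift_mat n (matD_diag eta lam)"
proof (intro ext)
  fix i j
  have "matA n eta lam i j = (\<Sum>k<n. if k = i then matD n eta lam i i * matP n i j else 0)"
    unfolding matA_def mat_mul_def by (rule sum.cong) (auto simp: matD_def)
  then show "matA n eta lam i j = shift_mat n (matD_diag eta lam) i j"
    by (simp add: matD_def matP_def shift_mat_def matD_diag_def)
qed

lemma prod_matD_diag:
  assumes "2 \<le> n"
  shows "(\<Prod>t<n. matD_diag eta lam t) = eta ^ (n - 1) * lam ^ n"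
proof -
  have "(\<Prod>t<n. matD_diag eta lam t) = lam * (\<Prod>t\<in>{..<n} - {1}. eta * lam)"
    using assms by (simp add: prod.remove[of _ 1] matD_diag_def)
  also have "\<dots> = lam * (eta * lam) ^ (n - 1)"
    using assms by simp
  also have "\<dots> = eta ^ (n - 1) * lam ^ Suc (n - 1)"
    by (simp add: power_mult_distrib)
  finally show ?thesis using assms by simp
qed

lemma row_act_shift_mat:
  fixes d :: "nat \<Rightarrow> 'a::comm_semiring_1"
  assumes "i < n"
  shows "row_act n v (shift_mat n d) (Suc i mod n) = d i * v i"
proof -
  have "k = i" if "k < n" "Suc k mod n = Suc i mod n" for k
    using that assms by (auto simp: mod_Suc split: if_splits)
  then have "(\<Sum>k<n. v k * shift_mat n d k (Suc i mod n)) = (\<Sum>k<n. if k = i then v i * d i else 0)"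
    using assms unfolding shift_mat_def by (intro sum.cong) auto
  then have "row_act n v (shift_mat n d) (Suc i mod n) = (\<Sum>k<n. if k = i then v i * d i else 0)"
    using assms by (simp add: row_act_def)
  then show ?thesis using assms by (simp add: mult.commute)
qed

lemma row_act_shift_mat_pow:
  fixes d :: "nat \<Rightarrow> 'a::comm_semiring_1"
  assumes "v \<in> Fn n" "j < n"
  shows "row_act n v (mat_pow n (shift_mat n d) k) ((j + k) mod n)
           = (\<Prod>t<k. d ((j + t) mod n)) * v j"
proof (induction k)
  case 0
  show ?case using assms by (simp add: row_act_id_mat)
next
  case (Suc k)
  have "(j + Suc k) mod n = Suc ((j + k) mod n) mod n" by (simp add: mod_Suc_eq)
  with Suc show ?case
    using assms by (simp add: row_act_mat_mul row_act_in_Fn row_act_shift_mat ac_simps)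
qed

lemma prod_rotate:
  fixes f :: "nat \<Rightarrow> 'a::comm_monoid_mult"
  shows "(\<Prod>t<n. f ((j + t) mod n)) = (\<Prod>t<n. f t)"
proof (cases "n = 0")
  case False
  have "a = b" if "a \<le> b" "b < n" "(j + a) mod n = (j + b) mod n" for a b
  proof -
    have "n dvd b - a" using that mod_eq_dvd_iff_nat[of "j + a" "j + b" n] by simp
    moreover have "b - a < n" using that by linarith
    ultimately have "b - a = 0" using nat_dvd_not_less by blast
    then show ?thesis using that(1) by simp
  qed
  then have "inj_on (\<lambda>t. (j + t) mod n) {..<n}"
    by (intro inj_onI) (metis lessThan_iff linorder_le_cases)
  then have "(\<lambda>t. (j + t) mod n) ` {..<n} = {..<n}"
    using False by (intro endo_inj_surj) auto
  then show ?thesis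
    using prod.reindex[OF \<open>inj_on _ _\<close>, of f] by (simp add: comp_def)
qed simp

lemma row_act_shift_mat_pow_n:
  fixes d :: "nat \<Rightarrow> 'a::field"
  assumes "v \<in> Fn n"
  shows "row_act n v (mat_pow n (shift_mat n d) n) = vscale (\<Prod>t<n. d t) v"
proof
  fix j
  show "row_act n v (mat_pow n (shift_mat n d) n) j = vscale (\<Prod>t<n. d t) v j"
  proof (cases "j < n")
    case True
    then show ?thesis
      using row_act_shift_mat_pow[OF assms True, of d n] by (simp add: prod_rotate vscale_def)
  qed (use assms in \<open>simp add: row_act_def vscale_def Fn_def\<close>)
qed

lemma row_act_shift_mat_pow_mult_n:
  fixes d :: "nat \<Rightarrow> 'a::field"
  assumes "v \<in> Fn n"
  shows "row_act n v (mat_pow n (shift_mat n d) (n * k)) = vscale ((\<Prod>t<n. d t) ^ k) v"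
proof (induction k)
  case 0
  show ?case using assms by (simp add: row_act_id_mat vscale_def)
next
  case (Suc k)
  have "row_act n v (mat_pow n (shift_mat n d) (n + n * k))
      = row_act n (vscale (\<Prod>t<n. d t) v) (mat_pow n (shift_mat n d) (n * k))"
    using assms by (simp add: row_act_mat_pow_add row_act_shift_mat_pow_n)
  then show ?case
    using Suc by (simp add: row_act.scale VS.scale_scale)
qed

section \<open>The quadratic extension\<close>

lemma exists_quadratic_without_root: "\<exists>a b :: 'a::{field,finite}. \<forall>t. t * t \<noteq> a * t + b"
proof -
  \<comment> \<open>\<open>x\<^sup>2 = a x + b\<close> has the roots \<open>s, t\<close> iff \<open>(a, b) = (s + t, - s t)\<close>, and this map is not injective.\<close>
  define f :: "'a \<times> 'a \<Rightarrow> 'a \<times> 'a" where "f = (\<lambda>(s, t). (s + t, - (s * t)))"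
  have "f (0, 1) = f (1, 0)" by (simp add: f_def)
  then have "\<not> inj f" unfolding inj_def by (metis zero_neq_one prod.inject)
  moreover have "finite (UNIV :: ('a \<times> 'a) set)" by simp
  ultimately have "\<not> surj f" using finite_UNIV_surj_inj by blast
  then obtain p where p: "p \<notin> range f" by blast
  have "\<forall>t. t * t \<noteq> fst p * t + snd p"
  proof (intro allI notI)
    fix t
    assume "t * t = fst p * t + snd p"
    then have "f (t, fst p - t) = p" by (simp add: f_def prod_eq_iff algebra_simps)
    with p show False by (metis rangeI)
  qed
  then show ?thesis by blast
qed

definition theta_sq :: "'a::{field,finite} \<times> 'a" where
  "theta_sq = (SOME (a, b). \<forall>t. t * t \<noteq> a * t + b)"

abbreviation theta_a :: "'a::{field,finite}" where "theta_a \<equiv> fst theta_sq"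
abbreviation theta_b :: "'a::{field,finite}" where "theta_b \<equiv> snd theta_sq"

lemma theta_sq_no_root: "t * t \<noteq> theta_a * t + theta_b"
proof -
  have "\<exists>p. case p of (a, b) \<Rightarrow> \<forall>t::'a. t * t \<noteq> a * t + b"
    using exists_quadratic_without_root by auto
  then have "case theta_sq of (a, b) \<Rightarrow> \<forall>t::'a. t * t \<noteq> a * t + b"
    unfolding theta_sq_def by (rule someI_ex)
  then show ?thesis by (simp add: case_prod_unfold)
qed

text \<open>\<open>Ext2 a b\<close> stands for \<open>a + b \<theta>\<close>, where \<open>\<theta>\<^sup>2 = theta_a \<theta> + theta_b\<close>; the other root of
  this irreducible quadratic is \<open>theta_a - \<theta>\<close>, which gives the conjugation and the norm.\<close>

datatype 'a ext2 = Ext2 (ext_fst: 'a) (ext_snd: 'a)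

definition ext2_norm :: "'a::{field,finite} ext2 \<Rightarrow> 'a" where
  "ext2_norm x = ext_fst x * ext_fst x + theta_a * ext_fst x * ext_snd x - theta_b * ext_snd x * ext_snd x"

lemma ext2_norm_eq_0: "ext2_norm x = 0 \<Longrightarrow> x = Ext2 0 0"
proof (rule ccontr)
  assume N: "ext2_norm x = 0" and "x \<noteq> Ext2 0 0"
  then have b: "ext_snd x \<noteq> 0" by (cases x) (auto simp: ext2_norm_def)
  define t where "t = - ext_fst x / ext_snd x"
  have "(t * t - theta_a * t - theta_b) * (ext_snd x * ext_snd x) = ext2_norm x"
    using b by (simp add: t_def ext2_norm_def field_simps)
  then have "t * t - theta_a * t - theta_b = 0" using N b by simp
  then show False using theta_sq_no_root[of t] by (simp add: algebra_simps)
qed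

instantiation ext2 :: ("{field,finite}") field
begin

definition "0 = Ext2 0 0"
definition "1 = Ext2 1 0"
definition "x + y = Ext2 (ext_fst x + ext_fst y) (ext_snd x + ext_snd y)"
definition "x - y = Ext2 (ext_fst x - ext_fst y) (ext_snd x - ext_snd y)"
definition "- x = Ext2 (- ext_fst x) (- ext_snd x)"
definition "x * y = Ext2 (ext_fst x * ext_fst y + theta_b * ext_snd x * ext_snd y)
  (ext_fst x * ext_snd y + ext_snd x * ext_fst y + theta_a * ext_snd x * ext_snd y)"
definition "inverse x = Ext2 ((ext_fst x + theta_a * ext_snd x) / ext2_norm x) (- ext_snd x / ext2_norm x)"
definition "x div y = x * inverse (y :: 'a ext2)"

instance
proof
  fix a b c :: "'a ext2"
  show "a * b * c = a * (b * c)" by (simp add: times_ext2_def algebra_simps)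
  show "a * b = b * a" by (simp add: times_ext2_def algebra_simps)
  show "1 * a = a" by (simp add: times_ext2_def one_ext2_def)
  show "a + b + c = a + (b + c)" by (simp add: plus_ext2_def algebra_simps)
  show "a + b = b + a" by (simp add: plus_ext2_def algebra_simps)
  show "0 + a = a" by (simp add: plus_ext2_def zero_ext2_def)
  show "- a + a = 0" by (simp add: plus_ext2_def zero_ext2_def uminus_ext2_def)
  show "a - b = a + - b" by (simp add: plus_ext2_def minus_ext2_def uminus_ext2_def)
  show "(a + b) * c = a * c + b * c" by (simp add: plus_ext2_def times_ext2_def algebra_simps)
  show "(0::'a ext2) \<noteq> 1" by (simp add: zero_ext2_def one_ext2_def)
  show "a div b = a * inverse b" by (simp add: divide_ext2_def)
  show "inverse (0::'a ext2) = 0" by (simp add: inverse_ext2_def zero_ext2_def ext2_norm_def)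
  assume "a \<noteq> 0"
  then have N: "ext2_norm a \<noteq> 0" using ext2_norm_eq_0 by (auto simp: zero_ext2_def)
  have "(ext_fst a + theta_a * ext_snd a) * ext_fst a - theta_b * ext_snd a * ext_snd a = ext2_norm a"
    by (simp add: ext2_norm_def algebra_simps)
  moreover have "(ext_fst a + theta_a * ext_snd a) * ext_snd a - ext_snd a * ext_fst a
      - theta_a * ext_snd a * ext_snd a = 0"
    by (simp add: algebra_simps)
  ultimately show "inverse a * a = 1"
    using N by (simp add: inverse_ext2_def times_ext2_def one_ext2_def field_simps)
qed

end

lemma UNIV_ext2: "(UNIV :: 'a ext2 set) = case_prod Ext2 ` UNIV"
  by (auto simp: image_iff) (metis ext2.exhaust)

instance ext2 :: (finite) finite
  by standard (simp add: UNIV_ext2)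

lemma card_ext2: "CARD('a::finite ext2) = CARD('a) ^ 2"
proof -
  have "inj (case_prod Ext2 :: 'a \<times> 'a \<Rightarrow> 'a ext2)" by (auto simp: inj_def)
  then have "CARD('a ext2) = CARD('a \<times> 'a)" by (simp add: UNIV_ext2 card_image)
  then show ?thesis by (simp add: power2_eq_square)
qed

definition of_base :: "'a::{field,finite} \<Rightarrow> 'a ext2" where
  "of_base a = Ext2 a 0"

definition theta :: "'a::{field,finite} ext2" where
  "theta = Ext2 0 1"

lemma of_base_add [simp]: "of_base (a + b) = of_base a + of_base b"
  and of_base_diff [simp]: "of_base (a - b) = of_base a - of_base b"
  and of_base_mult [simp]: "of_base (a * b) = of_base a * of_base b"
  and of_base_0 [simp]: "of_base 0 = 0"
  and of_base_1 [simp]: "of_base 1 = 1"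
  and of_base_inverse [simp]: "of_base (inverse a) = inverse (of_base a)"
  and of_base_eq_iff [simp]: "of_base a = of_base b \<longleftrightarrow> a = b"
  by (simp_all add: of_base_def plus_ext2_def minus_ext2_def times_ext2_def zero_ext2_def
      one_ext2_def inverse_ext2_def ext2_norm_def field_simps)

lemma of_base_power [simp]: "of_base (a ^ k) = of_base a ^ k"
  by (induction k) simp_all

lemma of_base_eq_0_iff [simp]: "of_base a = 0 \<longleftrightarrow> a = 0"
  using of_base_eq_iff[of a 0] by (simp del: of_base_eq_iff)

lemma ext_snd_add [simp]: "ext_snd (x + y) = ext_snd x + ext_snd y"
  and ext_snd_diff [simp]: "ext_snd (x - y) = ext_snd x - ext_snd y"
  and ext_snd_of_base_mult [simp]: "ext_snd (of_base a * x) = a * ext_snd x"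
  and ext_snd_0 [simp]: "ext_snd 0 = 0"
  and ext_snd_1 [simp]: "ext_snd 1 = 0"
  and ext_snd_theta [simp]: "ext_snd theta = 1"
  by (simp_all add: plus_ext2_def minus_ext2_def times_ext2_def of_base_def zero_ext2_def
      one_ext2_def theta_def)

lemma ext_snd_eq_0_iff: "ext_snd x = 0 \<longleftrightarrow> x \<in> range of_base"
  by (cases x) (auto simp: of_base_def)

lemma ext2_decompose: "x = of_base (ext_fst x) * 1 + of_base (ext_snd x) * theta"
  by (cases x) (simp add: of_base_def theta_def plus_ext2_def times_ext2_def one_ext2_def)

definition ext2_conj :: "'a::{field,finite} ext2 \<Rightarrow> 'a ext2" where
  "ext2_conj x = Ext2 (ext_fst x + theta_a * ext_snd x) (- ext_snd x)"

definition ext2_trace :: "'a::{field,finite} ext2 \<Rightarrow> 'a" where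
  "ext2_trace x = 2 * ext_fst x + theta_a * ext_snd x"

lemma ext2_conj_conj [simp]: "ext2_conj (ext2_conj x) = x"
  by (simp add: ext2_conj_def)

lemma ext2_add_conj: "x + ext2_conj x = of_base (ext2_trace x)"
  by (simp add: ext2_conj_def ext2_trace_def plus_ext2_def of_base_def)

lemma ext2_mult_conj: "x * ext2_conj x = of_base (ext2_norm x)"
  by (simp add: ext2_conj_def ext2_norm_def times_ext2_def of_base_def algebra_simps)

lemma ext2_min_poly:
  "(y - x) * (y - ext2_conj x) = y * y - of_base (ext2_trace x) * y + of_base (ext2_norm x)"
  by (simp add: algebra_simps flip: ext2_add_conj ext2_mult_conj)

section \<open>Multiplicative orders in finite fields\<close>

lemma two_le_card: "2 \<le> CARD('a::{field,finite})"
  using card_mono[of "UNIV :: 'a set" "{0, 1}"] by simp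

lemma nat_pow_ring_of_type_algebra: "x [^]\<^bsub>ring_of_type_algebra\<^esub> (k::nat) = (x::'a::field) ^ k"
  by (induction k) (simp_all add: ring_of_type_algebra_def)

lemma power_card_minus_1:
  fixes x :: "'a::{field,finite}"
  assumes "x \<noteq> 0"
  shows "x ^ (CARD('a) - 1) = 1"
proof -
  let ?R = "ring_of_type_algebra :: 'a ring"
  let ?M = "Multiplicative_Group.mult_of ?R"
  interpret R: field ?R by blast
  interpret M: group ?M by (rule R.field_mult_group)
  have "Coset.order ?M = CARD('a) - 1"
    by (simp add: R.order_mult_of Coset.order_def ring_of_type_algebra_def)
  moreover have "x [^]\<^bsub>?M\<^esub> Coset.order ?M = \<one>\<^bsub>?M\<^esub>"
    using assms by (intro M.pow_order_eq_1) (simp add: ring_of_type_algebra_def)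
  ultimately have "x [^]\<^bsub>?R\<^esub> (CARD('a) - 1) = \<one>\<^bsub>?R\<^esub>"
    by (simp add: Multiplicative_Group.nat_pow_mult_of)
  then show ?thesis
    unfolding nat_pow_ring_of_type_algebra by (simp add: ring_of_type_algebra_def)
qed

lemma exists_generator:
  "\<exists>g::'a::{field,finite}. g \<noteq> 0 \<and> (\<forall>x. x \<noteq> 0 \<longrightarrow> (\<exists>i. x = g ^ i))"
proof -
  let ?R = "ring_of_type_algebra :: 'a ring"
  let ?M = "Multiplicative_Group.mult_of ?R"
  interpret R: field ?R by blast
  have units: "carrier ?M = UNIV - {0}"
    by (simp add: ring_of_type_algebra_def)
  have "finite (carrier ?R)" by (simp add: ring_of_type_algebra_def)
  then obtain g where "g \<in> carrier ?M" and "carrier ?M = {g [^]\<^bsub>?R\<^esub> i | i::nat. i \<in> UNIV}"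
    using R.finite_field_mult_group_has_gen by blast
  then have "g \<noteq> 0" and "\<forall>x. x \<noteq> 0 \<longrightarrow> (\<exists>i. x = g ^ i)"
    unfolding units nat_pow_ring_of_type_algebra by auto
  then show ?thesis by blast
qed

lemma
  fixes x :: "'a::{field,finite}"
  assumes "x \<noteq> 0"
  shows mult_ord_pos: "0 < mult_ord x"
    and power_mult_ord: "x ^ mult_ord x = 1"
proof -
  have "0 < CARD('a) - 1"
    using two_le_card[where 'a='a] by simp
  then have "0 < mult_ord x \<and> x ^ mult_ord x = 1"
    unfolding mult_ord_def using power_card_minus_1[OF assms] by (intro LeastI) blast
  then show "0 < mult_ord x" "x ^ mult_ord x = 1" by auto
qed

lemma power_mod_mult_ord:
  fixes x :: "'a::{field,finite}"
  assumes "x \<noteq> 0"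
  shows "x ^ (k mod mult_ord x) = x ^ k"
proof -
  let ?m = "mult_ord x"
  have "x ^ k = x ^ (?m * (k div ?m) + k mod ?m)" by simp
  also have "\<dots> = (x ^ ?m) ^ (k div ?m) * x ^ (k mod ?m)" by (simp only: power_add power_mult)
  finally show ?thesis using power_mult_ord[OF assms] by simp
qed

lemma power_eq_1_iff_mult_ord_dvd:
  fixes x :: "'a::{field,finite}"
  assumes "x \<noteq> 0"
  shows "x ^ k = 1 \<longleftrightarrow> mult_ord x dvd k"
proof
  let ?m = "mult_ord x"
  assume "x ^ k = 1"
  then have "x ^ (k mod ?m) = 1" by (simp add: power_mod_mult_ord[OF assms])
  moreover have "k mod ?m < ?m" using mult_ord_pos[OF assms] by simp
  ultimately have "\<not> 0 < k mod ?m"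
    using not_less_Least[of "k mod ?m" "\<lambda>m. 0 < m \<and> x ^ m = 1"] unfolding mult_ord_def by auto
  then show "?m dvd k" by (simp add: dvd_eq_mod_eq_0)
next
  assume "mult_ord x dvd k"
  then show "x ^ k = 1" using power_mult_ord[OF assms] by (auto simp: power_mult)
qed

lemma mult_ord_eqI:
  fixes x :: "'a::{field,finite}"
  assumes "x \<noteq> 0" and "\<And>k. x ^ k = 1 \<longleftrightarrow> m dvd k"
  shows "mult_ord x = m"
  using assms power_eq_1_iff_mult_ord_dvd[OF assms(1)] by (metis dvd_antisym dvd_refl)

lemma mult_ord_dvd_card_minus_1:
  fixes x :: "'a::{field,finite}"
  assumes "x \<noteq> 0"
  shows "mult_ord x dvd CARD('a) - 1"
  using power_card_minus_1[OF assms] power_eq_1_iff_mult_ord_dvd[OF assms] by simp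

lemma mult_ord_power_coprime:
  fixes x :: "'a::{field,finite}"
  assumes "x \<noteq> 0" and "coprime e (mult_ord x)"
  shows "mult_ord (x ^ e) = mult_ord x"
proof (rule mult_ord_eqI)
  show "x ^ e \<noteq> 0" using assms(1) by simp
  show "(x ^ e) ^ k = 1 \<longleftrightarrow> mult_ord x dvd k" for k
    using assms by (simp add: power_eq_1_iff_mult_ord_dvd flip: power_mult)
      (metis coprime_commute coprime_dvd_mult_right_iff)
qed

lemma mult_ord_of_base: "a \<noteq> 0 \<Longrightarrow> mult_ord (of_base a) = mult_ord a"
  by (rule mult_ord_eqI) (auto simp: power_eq_1_iff_mult_ord_dvd simp flip: of_base_power of_base_1)

lemma card_minus_1_le_mult_ord_mult:
  fixes x y :: "'a::{field,finite}"
  assumes "x \<noteq> 0" "y \<noteq> 0" and gen: "\<And>z. z \<noteq> 0 \<Longrightarrow> \<exists>i j. z = x ^ i * y ^ j"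
  shows "CARD('a) - 1 \<le> mult_ord x * mult_ord y"
proof -
  let ?P = "\<lambda>(i, j). x ^ i * y ^ j"
  have "UNIV - {0} \<subseteq> ?P ` ({..<mult_ord x} \<times> {..<mult_ord y})"
  proof
    fix z :: 'a
    assume "z \<in> UNIV - {0}"
    then obtain i j where z: "z = x ^ i * y ^ j" using gen by blast
    have "x ^ i = x ^ (i mod mult_ord x)" "y ^ j = y ^ (j mod mult_ord y)"
      using assms(1,2) by (simp_all add: power_mod_mult_ord)
    then have "z = ?P (i mod mult_ord x, j mod mult_ord y)" using z by simp
    moreover have "(i mod mult_ord x, j mod mult_ord y) \<in> {..<mult_ord x} \<times> {..<mult_ord y}"
      using assms(1,2) by (simp add: mult_ord_pos)
    ultimately show "z \<in> ?P ` ({..<mult_ord x} \<times> {..<mult_ord y})" by blast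
  qed
  then have "card (UNIV - {0::'a}) \<le> card ({..<mult_ord x} \<times> {..<mult_ord y})"
    by (meson card_image_le card_mono finite_SigmaI finite_imageI finite_lessThan le_trans)
  then show ?thesis by (simp add: card_Diff_subset card_cartesian_product)
qed

lemma mult_ord_mult_eq_card_minus_1:
  fixes x y :: "'a::{field,finite}"
  assumes "x \<noteq> 0" "y \<noteq> 0" "coprime (mult_ord x) (mult_ord y)"
    and gen: "\<And>z. z \<noteq> 0 \<Longrightarrow> \<exists>i j. z = x ^ i * y ^ j"
  shows "mult_ord x * mult_ord y = CARD('a) - 1"
proof (rule antisym)
  have "mult_ord x * mult_ord y dvd CARD('a) - 1"
    using divides_mult mult_ord_dvd_card_minus_1 assms(1-3) by blast
  then show "mult_ord x * mult_ord y \<le> CARD('a) - 1"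
    using two_le_card[where 'a='a] by (intro dvd_imp_le) auto
  show "CARD('a) - 1 \<le> mult_ord x * mult_ord y"
    by (rule card_minus_1_le_mult_ord_mult[OF assms(1,2) gen])
qed

lemma mult_ord_generator:
  fixes g :: "'a::{field,finite}"
  assumes "g \<noteq> 0" and gen: "\<And>x. x \<noteq> 0 \<Longrightarrow> \<exists>i. x = g ^ i"
  shows "mult_ord g = CARD('a) - 1"
proof -
  have "mult_ord (1::'a) = 1" by (rule mult_ord_eqI) simp_all
  then have "CARD('a) - 1 \<le> mult_ord g"
    using card_minus_1_le_mult_ord_mult[of g 1] assms by fastforce
  moreover have "mult_ord g \<le> CARD('a) - 1"
    using mult_ord_dvd_card_minus_1[OF assms(1)] two_le_card[where 'a='a]
    by (intro dvd_imp_le) auto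
  ultimately show ?thesis by simp
qed

section \<open>Two-dimensional codes from the quadratic extension\<close>

lemma dim_1_invariant_has_eigenvector:
  fixes C :: "(nat \<Rightarrow> 'a::field) set"
  assumes "VS.dim C = 1" and "\<And>v. v \<in> C \<Longrightarrow> f v \<in> C"
  shows "\<exists>v\<in>C. v \<noteq> 0 \<and> (\<exists>k. f v = vscale k v)"
proof -
  obtain B where B: "B \<subseteq> C" "VS.independent B" "C \<subseteq> VS.span B" "card B = 1"
    using VS.basis_exists assms(1) by metis
  then obtain b where b: "B = {b}" by (auto simp: card_Suc_eq)
  have "b \<noteq> 0" using B(2) b by simp
  have mult: "\<exists>k. w = vscale k b" if "w \<in> C" for w
    using B(3) b that by (auto simp: VS.span_singleton)
  have "b \<in> C" using B(1) b by simp
  obtain k where "f b = vscale k b" using mult assms(2)[OF \<open>b \<in> C\<close>] by blast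
  then show ?thesis using \<open>b \<in> C\<close> \<open>b \<noteq> 0\<close> by blast
qed

text \<open>Identifying \<open>'a ext2\<close> with \<open>'a\<^sup>2\<close> via \<open>1, \<theta>\<close>, the codeword of \<open>z\<close> lists the
  \<open>\<theta>\<close>-coordinates of \<open>z \<gamma>\<^sup>-\<^sup>k\<close>, weighted by the partial products of \<open>d\<close>; the weights are
  chosen so that the weighted shift becomes multiplication by \<open>\<gamma>\<close>.\<close>

definition ext2_codeword :: "nat \<Rightarrow> (nat \<Rightarrow> 'a) \<Rightarrow> 'a ext2 \<Rightarrow> 'a ext2 \<Rightarrow> nat \<Rightarrow> 'a::{field,finite}"
  where "ext2_codeword n d \<gamma> z = (\<lambda>k. if k < n then (\<Prod>t<k. d t) * ext_snd (z * inverse \<gamma> ^ k) else 0)"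

definition ext2_code :: "nat \<Rightarrow> (nat \<Rightarrow> 'a) \<Rightarrow> 'a ext2 \<Rightarrow> (nat \<Rightarrow> 'a::{field,finite}) set"
  where "ext2_code n d \<gamma> = range (ext2_codeword n d \<gamma>)"

lemma ext2_codeword_in_Fn: "ext2_codeword n d \<gamma> z \<in> Fn n"
  by (simp add: ext2_codeword_def Fn_def)

lemma ext2_codeword_add: "ext2_codeword n d \<gamma> (z + w) = ext2_codeword n d \<gamma> z + ext2_codeword n d \<gamma> w"
  and ext2_codeword_diff: "ext2_codeword n d \<gamma> (z - w) = ext2_codeword n d \<gamma> z - ext2_codeword n d \<gamma> w"
  and ext2_codeword_0: "ext2_codeword n d \<gamma> 0 = 0"
  by (simp_all add: ext2_codeword_def fun_eq_iff algebra_simps)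

lemma ext2_codeword_of_base_mult:
  "ext2_codeword n d \<gamma> (of_base a * z) = vscale a (ext2_codeword n d \<gamma> z)"
  by (simp add: ext2_codeword_def vscale_def fun_eq_iff mult.assoc mult.left_commute[of _ a])

lemma ext2_codeword_eq_0_iff:
  assumes "2 \<le> n" "d 0 \<noteq> 0" "\<gamma> \<notin> range of_base"
  shows "ext2_codeword n d \<gamma> z = 0 \<longleftrightarrow> z = 0"
proof
  assume "ext2_codeword n d \<gamma> z = 0"
  then have "ext2_codeword n d \<gamma> z 0 = 0" "ext2_codeword n d \<gamma> z 1 = 0" by simp_all
  then have c0: "ext_snd z = 0" and c1: "d 0 * ext_snd (z * inverse \<gamma>) = 0"
    using assms(1) by (simp_all add: ext2_codeword_def)
  obtain a where z: "z = of_base a" using c0 by (auto simp: ext_snd_eq_0_iff)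
  have "inverse \<gamma> \<notin> range of_base"
  proof
    assume "inverse \<gamma> \<in> range of_base"
    then obtain b where "inverse \<gamma> = of_base b" by blast
    then have "\<gamma> = of_base (inverse b)" by (metis inverse_inverse_eq of_base_inverse)
    then show False using assms(3) by blast
  qed
  then have "ext_snd (inverse \<gamma>) \<noteq> 0" by (simp add: ext_snd_eq_0_iff)
  then show "z = 0" using c1 assms(2) z by simp
qed (simp add: ext2_codeword_0)

lemma ext2_codeword_inj:
  assumes "2 \<le> n" "d 0 \<noteq> 0" "\<gamma> \<notin> range of_base"
  shows "inj (ext2_codeword n d \<gamma>)"
  using ext2_codeword_eq_0_iff[of n d \<gamma>, OF assms]
  by (intro injI) (metis ext2_codeword_diff eq_iff_diff_eq_0)

lemma row_act_ext2_codeword: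
  assumes "2 \<le> n" "\<gamma> \<noteq> 0" "\<gamma> ^ n = of_base (\<Prod>t<n. d t)"
  shows "row_act n (ext2_codeword n d \<gamma> z) (shift_mat n d) = ext2_codeword n d \<gamma> (\<gamma> * z)"
proof
  fix j
  let ?v = "ext2_codeword n d \<gamma> z"
  show "row_act n ?v (shift_mat n d) j = ext2_codeword n d \<gamma> (\<gamma> * z) j"
  proof (cases "j < n")
    case False
    then show ?thesis by (simp add: row_act_def ext2_codeword_def)
  next
    case True
    show ?thesis
    proof (cases j)
      case 0
      obtain m where n: "n = Suc m" using assms(1) by (cases n) auto
      then have "row_act n ?v (shift_mat n d) j = (\<Prod>t<n. d t) * ext_snd (z * inverse \<gamma> ^ m)"
        using row_act_shift_mat[of m n ?v d] 0 by (simp add: ext2_codeword_def ac_simps)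
      also have "\<dots> = ext_snd (\<gamma> ^ n * (z * inverse \<gamma> ^ m))"
        by (simp add: assms(3))
      also have "\<gamma> ^ n * (z * inverse \<gamma> ^ m) = \<gamma> * z"
        using assms(2) n by (simp add: field_simps)
      finally show ?thesis using 0 assms(1) by (simp add: ext2_codeword_def)
    next
      case (Suc i)
      then have "i < n" "j = Suc i mod n" using True by auto
      then have "row_act n ?v (shift_mat n d) j = (\<Prod>t<Suc i. d t) * ext_snd (z * inverse \<gamma> ^ i)"
        using row_act_shift_mat[of i n ?v d] by (simp add: ext2_codeword_def ac_simps)
      also have "z * inverse \<gamma> ^ i = \<gamma> * z * inverse \<gamma> ^ Suc i"
        using assms(2) by (simp add: field_simps)
      finally show ?thesis using Suc True by (simp add: ext2_codeword_def)
    qed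
  qed
qed

lemma row_act_mat_pow_ext2_codeword:
  assumes "2 \<le> n" "\<gamma> \<noteq> 0" "\<gamma> ^ n = of_base (\<Prod>t<n. d t)"
  shows "row_act n (ext2_codeword n d \<gamma> z) (mat_pow n (shift_mat n d) m) = ext2_codeword n d \<gamma> (\<gamma> ^ m * z)"
proof (induction m)
  case 0
  show ?case by (simp add: row_act_id_mat ext2_codeword_in_Fn)
next
  case (Suc m)
  then show ?case
    by (simp add: row_act_mat_mul ext2_codeword_in_Fn row_act_ext2_codeword[OF assms] mult.assoc)
qed

lemma ext2_code_subspace: "VS.subspace (ext2_code n d \<gamma>)"
  unfolding ext2_code_def
proof (rule VS.subspaceI)
  let ?c = "ext2_codeword n d \<gamma>"
  show "0 \<in> range ?c"
    by (rule range_eqI[of _ _ 0]) (simp add: ext2_codeword_0)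
  show "x + y \<in> range ?c" if "x \<in> range ?c" "y \<in> range ?c" for x y
  proof -
    from that obtain a b where "x = ?c a" "y = ?c b" by blast
    then have "x + y = ?c (a + b)" by (simp add: ext2_codeword_add)
    then show ?thesis by blast
  qed
  show "vscale k x \<in> range ?c" if "x \<in> range ?c" for k x
  proof -
    from that obtain a where "x = ?c a" by blast
    then have "vscale k x = ?c (of_base k * a)" by (simp add: ext2_codeword_of_base_mult)
    then show ?thesis by blast
  qed
qed

lemma dim_ext2_code:
  assumes "2 \<le> n" "d 0 \<noteq> 0" "\<gamma> \<notin> range of_base"
  shows "VS.dim (ext2_code n d \<gamma>) = 2"
proof -
  let ?c = "ext2_codeword n d \<gamma>"
  have inj: "inj ?c" using ext2_codeword_inj[of n d \<gamma>] assms by blast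
  have span: "ext2_code n d \<gamma> \<subseteq> VS.span {?c 1, ?c theta}"
  proof
    fix v
    assume "v \<in> ext2_code n d \<gamma>"
    then obtain z where "v = ?c z" by (auto simp: ext2_code_def)
    also have "?c z = ?c (of_base (ext_fst z) * 1 + of_base (ext_snd z) * theta)"
      by (simp only: ext2_decompose[symmetric])
    finally have "v = vscale (ext_fst z) (?c 1) + vscale (ext_snd z) (?c theta)"
      by (simp only: ext2_codeword_add ext2_codeword_of_base_mult)
    then show "v \<in> VS.span {?c 1, ?c theta}"
      by (simp add: VS.span_add VS.span_base VS.span_scale)
  qed
  have "1 \<noteq> (theta :: 'a ext2)" by (simp add: theta_def one_ext2_def)
  then have ne: "?c 1 \<noteq> ?c theta" using inj by (simp add: inj_eq)
  have "?c 1 \<notin> VS.span {?c theta}"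
  proof
    assume "?c 1 \<in> VS.span {?c theta}"
    then obtain k where "?c 1 = ?c (of_base k * theta)"
      by (auto simp: VS.span_singleton ext2_codeword_of_base_mult)
    then have one: "(1::'a ext2) = of_base k * theta" using inj by (simp add: inj_eq)
    have "k = 0" using arg_cong[of _ _ ext_snd, OF one] by simp
    with one show False by simp
  qed
  moreover have "?c theta \<noteq> 0"
    using ext2_codeword_eq_0_iff[of n d \<gamma>] assms by (simp add: theta_def zero_ext2_def)
  ultimately have "VS.independent {?c 1, ?c theta}"
    by (simp add: VS.independent_insert)
  then show ?thesis
    using span ne by (intro VS.dim_unique[of "{?c 1, ?c theta}"]) (auto simp: ext2_code_def)
qed

lemma ext2_code_irreducible:
  assumes "2 \<le> n" "d 0 \<noteq> 0" "\<gamma> \<notin> range of_base" "\<gamma> ^ n = of_base (\<Prod>t<n. d t)"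
  shows "irreducible_code n 2 (shift_mat n d) (ext2_code n d \<gamma>)"
proof -
  have "\<gamma> \<noteq> 0" using assms(3) by (metis of_base_0 rangeI)
  note shift = row_act_ext2_codeword[OF assms(1) this assms(4)]
  have lin: "lin_code n 2 (ext2_code n d \<gamma>)"
    using ext2_code_subspace dim_ext2_code[of n d \<gamma>] assms ext2_codeword_in_Fn
    by (auto simp: lin_code_def ext2_code_def)
  have inv: "invariant_code n (shift_mat n d) (ext2_code n d \<gamma>)"
    by (auto simp: invariant_code_def ext2_code_def shift)
  have "False"
    if C: "lin_code n k' C" "invariant_code n (shift_mat n d) C" "C \<subseteq> ext2_code n d \<gamma>"
      and k': "1 \<le> k'" "k' < 2" for C k'
  proof -
    have "k' = 1" using k' by simp
    obtain v k where "v \<in> C" "v \<noteq> 0" "row_act n v (shift_mat n d) = vscale k v"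
      using dim_1_invariant_has_eigenvector[of C "\<lambda>v. row_act n v (shift_mat n d)"] C(1,2) \<open>k' = 1\<close>
      by (auto simp: lin_code_def invariant_code_def)
    moreover obtain z where "v = ext2_codeword n d \<gamma> z"
      using \<open>v \<in> C\<close> C(3) by (auto simp: ext2_code_def)
    ultimately have "ext2_codeword n d \<gamma> (\<gamma> * z) = ext2_codeword n d \<gamma> (of_base k * z)" "z \<noteq> 0"
      by (auto simp: shift ext2_codeword_of_base_mult ext2_codeword_0)
    then have "\<gamma> = of_base k"
      using ext2_codeword_inj[of n d \<gamma>] assms by (simp add: inj_eq)
    then show False using assms(3) by simp
  qed
  then show ?thesis
    using lin inv unfolding irreducible_code_def by blast
qed

lemma ext2_code_faithful:
  assumes "2 \<le> n" "d 0 \<noteq> 0" "\<gamma> \<notin> range of_base" "\<gamma> ^ n = of_base (\<Prod>t<n. d t)"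
    and order: "\<And>m. \<gamma> ^ m = 1 \<Longrightarrow> \<forall>v\<in>Fn n. row_act n v (mat_pow n (shift_mat n d) m) = v"
  shows "faithful_code n (shift_mat n d) (ext2_code n d \<gamma>)"
  unfolding faithful_code_def
proof (rule allI, rule impI)
  fix m
  assume "\<forall>v\<in>ext2_code n d \<gamma>. row_act n v (mat_pow n (shift_mat n d) m) = v"
  then have "ext2_codeword n d \<gamma> (\<gamma> ^ m * 1) = ext2_codeword n d \<gamma> 1"
    using assms(3) by (subst row_act_mat_pow_ext2_codeword[symmetric, OF assms(1) _ assms(4)])
      (auto simp: ext2_code_def)
  then have "\<gamma> ^ m = 1" using ext2_codeword_inj[of n d \<gamma>] assms by (simp add: inj_eq)
  then show "\<forall>i<n. \<forall>j<n. mat_pow n (shift_mat n d) m i j = id_mat i j"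
    using order id_mat_if_row_act_fixes by blast
qed

section \<open>Primitive roots of the scalar\<close>

lemma coprime_add_mult_self_iff: "coprime (j + n * u) n \<longleftrightarrow> coprime j (n::nat)"
  using gcd_add_mult[of n u j] by (simp add: coprime_iff_gcd_eq_1 gcd.commute ac_simps)

lemma coprime_odd_dvd_pred_Suc:
  fixes L q :: nat
  assumes "odd L" "L dvd q - 1" "1 \<le> q"
  shows "coprime L (q + 1)"
proof (rule coprimeI)
  fix c
  assume "c dvd L" "c dvd q + 1"
  then have "c dvd (q + 1) - (q - 1)" using assms(2) by (meson dvd_diff_nat dvd_trans)
  then have "c dvd 2" using assms(3) by simp
  then have "c \<le> 2" by (simp add: dvd_imp_le)
  moreover have "odd c" using \<open>c dvd L\<close> assms(1) by (meson dvd_trans)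
  ultimately show "is_unit c" by (cases c) auto
qed

lemma odd_if_coprime_pred:
  fixes j q :: nat
  assumes "coprime j (q - 1)" "2 \<le> q" "even (q + 1)"
  shows "odd (j + (q - 1) * u)"
proof -
  have "even (q - 1)" using assms(2,3) by auto
  then show ?thesis using assms(1) by (auto dest: coprime_common_divisor)
qed

lemma exists_coprime_shift:
  fixes j q s t r :: nat
  assumes "2 \<le> q" "coprime j (q - 1)" "q + 1 = 2 ^ s * r ^ t" "prime r" "odd r"
  shows "\<exists>u. coprime (j + (q - 1) * u) ((q + 1) * (q - 1))"
proof -
  define u :: nat where "u = (if r dvd j then 1 else 0)"
  let ?e = "j + (q - 1) * u"
  have "coprime ?e (2 ^ s)"
  proof (cases s)
    case (Suc s')
    then have "even (q + 1)" using assms(3) by simp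
    then have "odd ?e" using odd_if_coprime_pred[OF assms(2,1)] by blast
    then show ?thesis by simp
  qed simp
  moreover have "coprime ?e (r ^ t)"
  proof (cases t)
    case (Suc t')
    then have "r dvd q + 1" using assms(3) by simp
    have "\<not> r dvd q - 1"
    proof
      assume "r dvd q - 1"
      then have "r dvd (q + 1) - (q - 1)" using \<open>r dvd q + 1\<close> by (rule dvd_diff_nat[rotated])
      then have "r \<le> 2" using assms(1) by (simp add: dvd_imp_le)
      then show False using assms(4,5) prime_ge_2_nat[of r] by (cases "r = 2") auto
    qed
    then have "\<not> r dvd ?e" using assms(4) by (auto simp: u_def dvd_add_right_iff)
    then have "coprime ?e r" using assms(4) by (simp add: prime_imp_coprime coprime_commute)
    then show ?thesis by simp
  qed simp
  ultimately have "coprime ?e (q + 1)" unfolding assms(3) coprime_mult_right_iff ..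
  moreover have "coprime ?e (q - 1)" using assms(2) by (simp add: coprime_add_mult_self_iff)
  ultimately show ?thesis unfolding coprime_mult_right_iff by blast
qed

lemma coprime_shift_if_Suc_pow_2:
  fixes j q m :: nat
  assumes "2 \<le> q" "coprime j (q - 1)" "q + 1 = 2 ^ m"
  shows "coprime (j + (q - 1) * u) ((q + 1) * (q - 1))"
proof -
  have "0 < m" using assms(1,3) by (cases m) auto
  then have "even (q + 1)" using assms(3) by simp
  then have "odd (j + (q - 1) * u)" using odd_if_coprime_pred[OF assms(2,1)] by blast
  then have "coprime (j + (q - 1) * u) (2 ^ m)" by simp
  then have "coprime (j + (q - 1) * u) (q + 1)" unfolding assms(3) .
  moreover have "coprime (j + (q - 1) * u) (q - 1)" using assms(2) by (simp add: coprime_add_mult_self_iff)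
  ultimately show ?thesis unfolding coprime_mult_right_iff ..
qed

lemma mult_ord_dvd_if_power_eq_1:
  fixes x y :: "'a::{field,finite}"
  assumes "x \<noteq> 0" "y \<noteq> 0" "coprime (mult_ord x) (mult_ord y)" "(x ^ u * y ^ v) ^ m = 1"
  shows "mult_ord x dvd u * m"
proof -
  let ?L = "mult_ord y"
  have "(x ^ u * y ^ v) ^ (m * ?L) = x ^ (u * m * ?L) * (y ^ ?L) ^ (v * m)"
    by (simp add: power_mult_distrib ac_simps flip: power_mult)
  then have "x ^ (u * m * ?L) = 1"
    using assms(4) power_mult_ord[OF assms(2)] by (simp add: power_mult)
  then have "mult_ord x dvd u * m * ?L" using power_eq_1_iff_mult_ord_dvd[OF assms(1)] by simp
  then show ?thesis using assms(3) by (simp add: coprime_dvd_mult_left_iff)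
qed

text \<open>Under the hypotheses of the theorem, \<open>\<eta>^q \<lambda>^(q + 1)\<close>, the scalar by which \<open>A^(q + 1)\<close> acts,
  generates the group of units.\<close>

lemma mult_ord_eta_lam:
  fixes eta lam :: "'a::{field,finite}"
  assumes "eta \<noteq> 0" "lam \<noteq> 0"
    and gen: "{eta ^ i * lam ^ j | i j. True} = {x. x \<noteq> 0}"
    and "odd (mult_ord lam)" "\<exists>e. mult_ord eta = 2 ^ e"
  shows "mult_ord (eta ^ CARD('a) * lam ^ (CARD('a) + 1)) = CARD('a) - 1"
proof -
  let ?q = "CARD('a)" and ?E = "mult_ord eta" and ?L = "mult_ord lam"
  let ?c = "eta ^ ?q * lam ^ (?q + 1)"
  have q: "2 \<le> ?q" by (rule two_le_card)
  obtain e where "?E = 2 ^ e" using assms(5) by blast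
  then have EL: "coprime ?E ?L" using assms(4) by simp
  have card: "?E * ?L = ?q - 1"
  proof (rule mult_ord_mult_eq_card_minus_1[OF assms(1,2) EL])
    fix z :: 'a
    assume "z \<noteq> 0"
    then have "z \<in> {eta ^ i * lam ^ j | i j. True}" using gen by simp
    then show "\<exists>i j. z = eta ^ i * lam ^ j" by blast
  qed
  show ?thesis
  proof (rule mult_ord_eqI)
    show "?c \<noteq> 0" using assms(1,2) by simp
    fix k
    show "?c ^ k = 1 \<longleftrightarrow> ?q - 1 dvd k"
    proof
      assume ck: "?c ^ k = 1"
      have "?E dvd ?q * k"
        using mult_ord_dvd_if_power_eq_1[OF assms(1,2) EL ck] .
      moreover have "coprime (?q - 1) ?q" by (rule coprime_diff_one_left_nat) (use q in simp)
      then have "coprime ?E ?q"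
        using mult_ord_dvd_card_minus_1[OF assms(1)] by (meson coprime_divisors dvd_refl)
      ultimately have "?E dvd k" by (simp add: coprime_dvd_mult_right_iff)
      have "(lam ^ (?q + 1) * eta ^ ?q) ^ k = 1" using ck by (metis mult.commute)
      moreover have "coprime ?L ?E" using EL by (simp add: coprime_commute)
      ultimately have "?L dvd (?q + 1) * k"
        using mult_ord_dvd_if_power_eq_1[OF assms(2,1)] by blast
      moreover have "coprime ?L (?q + 1)"
        using assms(4) mult_ord_dvd_card_minus_1[OF assms(2)] q by (intro coprime_odd_dvd_pred_Suc) auto
      ultimately have "?L dvd k" using coprime_dvd_mult_right_iff[of ?L "?q + 1" k] by blast
      with \<open>?E dvd k\<close> have "?E * ?L dvd k" using EL by (simp add: divides_mult)
      then show "?q - 1 dvd k" by (simp only: card)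
    next
      assume "?q - 1 dvd k"
      then show "?c ^ k = 1"
        using power_card_minus_1[of ?c] assms(1,2) by (auto simp: power_mult)
    qed
  qed
qed

lemma card_ext2_minus_1: "CARD('a::finite ext2) - 1 = (CARD('a) + 1) * (CARD('a) - 1)"
  by (simp add: card_ext2 power2_eq_square algebra_simps)

lemma coprime_if_mult_ord_power:
  fixes g :: "'a::{field,finite}"
  assumes "g \<noteq> 0" "mult_ord g = a * b" "mult_ord (g ^ (a * j)) = b" "0 < b"
  shows "coprime j b"
proof -
  define e where "e = gcd j b"
  obtain m where m: "b = e * m" unfolding e_def by (meson gcd_dvd2 dvdE)
  obtain j' where j': "j = e * j'" unfolding e_def by (meson gcd_dvd1 dvdE)
  have exp: "a * j * m = mult_ord g * j'" unfolding assms(2) m j' by (simp only: ac_simps)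
  have "(g ^ (a * j)) ^ m = g ^ (a * j * m)" by (simp only: power_mult)
  also have "\<dots> = (g ^ mult_ord g) ^ j'" by (simp only: exp power_mult)
  also have "\<dots> = 1" using power_mult_ord[OF assms(1)] by simp
  finally have "b dvd m" using assms(1,3) power_eq_1_iff_mult_ord_dvd[of "g ^ (a * j)"] by simp
  then have "e * m dvd 1 * m" by (simp only: m mult_1)
  moreover have "m \<noteq> 0" using m assms(4) by auto
  ultimately have "e dvd 1" using dvd_times_right_cancel_iff[of m e 1] by blast
  then show ?thesis by (simp add: e_def coprime_iff_gcd_eq_1)
qed

lemma generator_exponent_of_base:
  fixes g :: "'a::{field,finite} ext2" and c :: 'a
  assumes "g \<noteq> 0" "\<And>x. x \<noteq> 0 \<Longrightarrow> \<exists>i. x = g ^ i"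
    and "c \<noteq> 0" "mult_ord c = CARD('a) - 1"
  shows "\<exists>j. of_base c = g ^ ((CARD('a) + 1) * j) \<and> coprime j (CARD('a) - 1)"
proof -
  let ?q = "CARD('a)"
  have q: "2 \<le> ?q" by (rule two_le_card)
  define Q where "Q = (?q + 1) * (?q - 1)"
  have ord: "mult_ord g = Q"
    using mult_ord_generator[OF assms(1,2)] unfolding card_ext2_minus_1 Q_def .
  have "of_base c \<noteq> 0" using assms(3) by simp
  then obtain k where k: "of_base c = g ^ k" using assms(2) by blast
  have "g ^ (k * (?q - 1)) = of_base (c ^ (?q - 1))" by (simp add: k power_mult)
  also have "\<dots> = 1" using power_card_minus_1[OF assms(3)] by simp
  finally have "Q dvd k * (?q - 1)" using assms(1) ord by (simp add: power_eq_1_iff_mult_ord_dvd)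
  then have "(?q + 1) * (?q - 1) dvd k * (?q - 1)" by (simp only: Q_def)
  moreover have "?q - 1 \<noteq> 0" using q by simp
  ultimately have "?q + 1 dvd k" using dvd_times_right_cancel_iff[of "?q - 1" "?q + 1" k] by blast
  then obtain j where j: "k = (?q + 1) * j" by (elim dvdE)
  have ordj: "mult_ord (g ^ ((?q + 1) * j)) = ?q - 1"
    using mult_ord_of_base[OF assms(3)] assms(4) k j by simp
  have "mult_ord g = (?q + 1) * (?q - 1)" using ord by (simp only: Q_def)
  then have "coprime j (?q - 1)"
    by (rule coprime_if_mult_ord_power[OF assms(1) _ ordj]) (use q in simp)
  then show ?thesis using k j by blast
qed

lemma inj_on_power_progression:
  fixes g :: "'a::{field,finite}"
  assumes "g \<noteq> 0" "mult_ord g = k * n"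
  shows "inj_on (\<lambda>u. g ^ (j + k * u)) {..<n}"
proof -
  have "u = u'" if "u \<le> u'" "u' < n" "g ^ (j + k * u) = g ^ (j + k * u')" for u u'
  proof -
    have "g ^ (j + k * u') = g ^ (j + k * u) * g ^ (k * (u' - u))"
      using \<open>u \<le> u'\<close> by (simp add: power_add[symmetric] diff_mult_distrib2)
    then have "g ^ (k * (u' - u)) = 1" using that(3) assms(1) by simp
    then have "k * n dvd k * (u' - u)" using assms by (simp add: power_eq_1_iff_mult_ord_dvd)
    moreover have "k \<noteq> 0" using assms mult_ord_pos[of g] by auto
    ultimately have "n dvd u' - u" by simp
    moreover have "u' - u < n" using that by linarith
    ultimately have "u' - u = 0" using nat_dvd_not_less by blast
    then show ?thesis using \<open>u \<le> u'\<close> by simp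
  qed
  then show ?thesis by (intro inj_onI) (metis lessThan_iff linorder_le_cases)
qed

lemma generator_power_norm:
  fixes g :: "'a::{field,finite} ext2"
  assumes "g \<noteq> 0" "\<And>x. x \<noteq> 0 \<Longrightarrow> \<exists>i. x = g ^ i"
    and "of_base c = g ^ ((CARD('a) + 1) * j)"
    and "coprime (j + (CARD('a) - 1) * u) ((CARD('a) + 1) * (CARD('a) - 1))"
  shows "g ^ (j + (CARD('a) - 1) * u) \<noteq> 0"
    and "mult_ord (g ^ (j + (CARD('a) - 1) * u)) = (CARD('a) + 1) * (CARD('a) - 1)"
    and "(g ^ (j + (CARD('a) - 1) * u)) ^ (CARD('a) + 1) = of_base c"
proof -
  let ?q = "CARD('a)"
  have ord: "mult_ord g = (?q + 1) * (?q - 1)"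
    using mult_ord_generator[OF assms(1,2)] unfolding card_ext2_minus_1 .
  show "g ^ (j + (?q - 1) * u) \<noteq> 0" using assms(1) by simp
  have "coprime (j + (?q - 1) * u) (mult_ord g)" using assms(4) by (simp only: ord)
  from mult_ord_power_coprime[OF assms(1) this]
  show "mult_ord (g ^ (j + (?q - 1) * u)) = (?q + 1) * (?q - 1)" unfolding ord .
  have "(j + p * u) * (?q + 1) = (?q + 1) * j + ((?q + 1) * p) * u" for p
    by (simp add: algebra_simps)
  then have exp: "(j + (?q - 1) * u) * (?q + 1) = (?q + 1) * j + mult_ord g * u"
    unfolding ord .
  have "(g ^ (j + (?q - 1) * u)) ^ (?q + 1) = g ^ ((j + (?q - 1) * u) * (?q + 1))"
    by (rule power_mult[symmetric])
  also have "\<dots> = g ^ ((?q + 1) * j) * (g ^ mult_ord g) ^ u"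
    by (simp only: exp power_add power_mult)
  finally have "(g ^ (j + (?q - 1) * u)) ^ (?q + 1) = g ^ ((?q + 1) * j) * (g ^ mult_ord g) ^ u" .
  then show "(g ^ (j + (?q - 1) * u)) ^ (?q + 1) = of_base c"
    using power_mult_ord[OF assms(1)] assms(3) by simp
qed

lemma not_of_base_if_primitive:
  fixes \<gamma> :: "'a::{field,finite} ext2"
  assumes "\<gamma> \<noteq> 0" "mult_ord \<gamma> = (CARD('a) + 1) * (CARD('a) - 1)"
  shows "\<gamma> \<notin> range of_base"
proof
  let ?q = "CARD('a)"
  have q: "2 \<le> ?q" by (rule two_le_card)
  assume "\<gamma> \<in> range of_base"
  then obtain a where a: "\<gamma> = of_base a" "a \<noteq> 0" using assms(1) by auto
  then have "(?q + 1) * (?q - 1) dvd ?q - 1"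
    using assms(2) mult_ord_of_base[OF a(2)] mult_ord_dvd_card_minus_1[OF a(2)] by simp
  then have "(?q + 1) * (?q - 1) \<le> 1 * (?q - 1)" using q by (simp add: dvd_imp_le)
  moreover have "1 * (?q - 1) < (?q + 1) * (?q - 1)" using q by (intro mult_strict_right_mono) auto
  ultimately show False by simp
qed

lemma ext2_code_of_primitive_root:
  fixes \<gamma> :: "'a::{field,finite} ext2"
  assumes d: "\<And>t. t < CARD('a) + 1 \<Longrightarrow> d t \<noteq> 0"
    and "\<gamma> \<noteq> 0" "mult_ord \<gamma> = (CARD('a) + 1) * (CARD('a) - 1)"
    and root: "\<gamma> ^ (CARD('a) + 1) = of_base (\<Prod>t<CARD('a) + 1. d t)"
  shows "faithful_code (CARD('a) + 1) (shift_mat (CARD('a) + 1) d) (ext2_code (CARD('a) + 1) d \<gamma>)"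
    and "irreducible_code (CARD('a) + 1) 2 (shift_mat (CARD('a) + 1) d) (ext2_code (CARD('a) + 1) d \<gamma>)"
proof -
  let ?q = "CARD('a)"
  let ?n = "?q + 1" and ?c = "\<Prod>t<?q + 1. d t"
  have q: "2 \<le> ?q" by (rule two_le_card)
  have ord: "\<gamma> ^ m = 1 \<longleftrightarrow> ?n * (?q - 1) dvd m" for m
    using assms(2,3) by (simp add: power_eq_1_iff_mult_ord_dvd)
  have "\<gamma> \<notin> range of_base" using not_of_base_if_primitive assms(2,3) by blast
  moreover have "2 \<le> ?n" "d 0 \<noteq> 0" using q d by auto
  ultimately show "irreducible_code ?n 2 (shift_mat ?n d) (ext2_code ?n d \<gamma>)"
    using ext2_code_irreducible root by blast
  have "?c \<noteq> 0" using d by simp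
  have "\<forall>v\<in>Fn ?n. row_act ?n v (mat_pow ?n (shift_mat ?n d) m) = v" if "\<gamma> ^ m = 1" for m
  proof
    fix v :: "nat \<Rightarrow> 'a"
    assume "v \<in> Fn ?n"
    have "?n * (?q - 1) dvd m" using ord that by blast
    then obtain k where "m = ?n * (?q - 1) * k" by (rule dvdE)
    then have "m = ?n * ((?q - 1) * k)" by (simp only: mult.assoc)
    then show "row_act ?n v (mat_pow ?n (shift_mat ?n d) m) = v"
      using row_act_shift_mat_pow_mult_n[OF \<open>v \<in> Fn ?n\<close>] power_card_minus_1[OF \<open>?c \<noteq> 0\<close>]
      by (simp add: power_mult VS.scale_one)
  qed
  then show "faithful_code ?n (shift_mat ?n d) (ext2_code ?n d \<gamma>)"
    using ext2_code_faithful \<open>2 \<le> ?n\<close> \<open>d 0 \<noteq> 0\<close> \<open>\<gamma> \<notin> range of_base\<close> root by blast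
qed

section \<open>Independence and direct sums\<close>

definition min_poly_op :: "nat \<Rightarrow> (nat \<Rightarrow> 'a) \<Rightarrow> 'a ext2 \<Rightarrow> (nat \<Rightarrow> 'a) \<Rightarrow> nat \<Rightarrow> 'a::{field,finite}"
  where "min_poly_op n d \<delta> v =
    row_act n (row_act n v (shift_mat n d)) (shift_mat n d)
    - vscale (ext2_trace \<delta>) (row_act n v (shift_mat n d)) + vscale (ext2_norm \<delta>) v"

lemma min_poly_op_sum: "min_poly_op n d \<delta> (\<Sum>i\<in>I. f i) = (\<Sum>i\<in>I. min_poly_op n d \<delta> (f i))"
  by (simp add: min_poly_op_def row_act.sum VS.scale_sum_right sum.distrib sum_subtractf)

lemma min_poly_op_ext2_codeword:
  assumes "2 \<le> n" "\<gamma> \<noteq> 0" "\<gamma> ^ n = of_base (\<Prod>t<n. d t)"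
  shows "min_poly_op n d \<delta> (ext2_codeword n d \<gamma> z)
    = ext2_codeword n d \<gamma> ((\<gamma> - \<delta>) * (\<gamma> - ext2_conj \<delta>) * z)"
proof -
  have "(\<gamma> - \<delta>) * (\<gamma> - ext2_conj \<delta>) * z
      = \<gamma> * (\<gamma> * z) - of_base (ext2_trace \<delta>) * (\<gamma> * z) + of_base (ext2_norm \<delta>) * z"
    unfolding ext2_min_poly by (simp add: algebra_simps)
  then show ?thesis
    by (simp add: min_poly_op_def row_act_ext2_codeword[OF assms] ext2_codeword_add
        ext2_codeword_diff ext2_codeword_of_base_mult)
qed

text \<open>The operator \<open>A\<^sup>2 - tr(\<delta>) A + N(\<delta>)\<close> kills the code of \<open>\<delta>\<close> but is injective on the code of
  every \<open>\<gamma>\<close> that is neither \<open>\<delta>\<close> nor its conjugate; this separates the codes.\<close>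

lemma min_poly_op_ext2_code:
  assumes "2 \<le> n" "d 0 \<noteq> 0" "\<gamma> \<notin> range of_base" "\<gamma> ^ n = of_base (\<Prod>t<n. d t)"
    and "v \<in> ext2_code n d \<gamma>"
  shows "min_poly_op n d \<delta> v \<in> ext2_code n d \<gamma>"
    and "min_poly_op n d \<delta> v = 0 \<longleftrightarrow> v = 0 \<or> \<gamma> = \<delta> \<or> \<gamma> = ext2_conj \<delta>"
proof -
  have "\<gamma> \<noteq> 0" using assms(3) by (metis of_base_0 rangeI)
  obtain z where v: "v = ext2_codeword n d \<gamma> z" using assms(5) by (auto simp: ext2_code_def)
  then have Qv: "min_poly_op n d \<delta> v = ext2_codeword n d \<gamma> ((\<gamma> - \<delta>) * (\<gamma> - ext2_conj \<delta>) * z)"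
    using min_poly_op_ext2_codeword[OF assms(1) \<open>\<gamma> \<noteq> 0\<close> assms(4)] by simp
  then show "min_poly_op n d \<delta> v \<in> ext2_code n d \<gamma>" by (simp add: ext2_code_def)
  show "min_poly_op n d \<delta> v = 0 \<longleftrightarrow> v = 0 \<or> \<gamma> = \<delta> \<or> \<gamma> = ext2_conj \<delta>"
    unfolding Qv using ext2_codeword_eq_0_iff[of n d \<gamma>] assms(1-3) v by auto
qed

lemma ext2_codes_independent:
  fixes D :: "nat \<Rightarrow> 'a::{field,finite} ext2"
  assumes "2 \<le> n" "d 0 \<noteq> 0"
    and D: "\<And>i. i < M \<Longrightarrow> D i \<notin> range of_base" "\<And>i. i < M \<Longrightarrow> D i ^ n = of_base (\<Prod>t<n. d t)"
    and distinct: "\<And>i i'. i < M \<Longrightarrow> i' < M \<Longrightarrow> D i = D i' \<or> D i = ext2_conj (D i') \<Longrightarrow> i = i'"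
    and in_codes: "\<forall>i<M. c i \<in> ext2_code n d (D i)" and sum: "(\<Sum>i<M. c i) = 0"
  shows "\<forall>i<M. c i = 0"
proof -
  have "\<And>c. m \<le> M \<Longrightarrow> \<forall>i<m. c i \<in> ext2_code n d (D i) \<Longrightarrow> (\<Sum>i<m. c i) = 0 \<Longrightarrow> \<forall>i<m. c i = 0"
    for m
  proof (induction m)
    case (Suc m)
    let ?Q = "min_poly_op n d (D m)"
    have Q: "?Q (c i) \<in> ext2_code n d (D i)"
      "?Q (c i) = 0 \<longleftrightarrow> c i = 0 \<or> D i = D m \<or> D i = ext2_conj (D m)" if "i < Suc m" for i
    proof -
      have "i < M" "c i \<in> ext2_code n d (D i)" using that Suc.prems(1,2) by auto
      then show "?Q (c i) \<in> ext2_code n d (D i)"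
        "?Q (c i) = 0 \<longleftrightarrow> c i = 0 \<or> D i = D m \<or> D i = ext2_conj (D m)"
        using min_poly_op_ext2_code[OF assms(1,2) D(1) D(2)] by blast+
    qed
    have "(\<Sum>i<Suc m. ?Q (c i)) = ?Q (\<Sum>i<Suc m. c i)"
      by (rule min_poly_op_sum[symmetric])
    also have "\<dots> = ?Q 0" by (simp only: Suc.prems(3))
    also have "\<dots> = 0" by (simp add: min_poly_op_def row_act.zero VS.scale_zero_right)
    finally have "(\<Sum>i<m. ?Q (c i)) + ?Q (c m) = 0" by (simp only: sum.lessThan_Suc)
    moreover have "?Q (c m) = 0" using Q(2)[of m] by simp
    ultimately have sum_Q: "(\<Sum>i<m. ?Q (c i)) = 0" by (simp only: add_0_right)
    have mem_Q: "\<forall>i<m. ?Q (c i) \<in> ext2_code n d (D i)" using Q(1) by simp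
    have "m \<le> M" using Suc.prems(1) by simp
    note Q0 = Suc.IH[OF this mem_Q sum_Q]
    have ci: "c i = 0" if "i < m" for i
      using Q0 Q(2)[of i] distinct[of i m] that Suc.prems(1) by auto
    then have "(\<Sum>i<m. c i) = 0" by (intro sum.neutral) simp
    then have "c m = 0" using Suc.prems(3) by (simp only: sum.lessThan_Suc add_0_left)
    with ci show ?case using less_Suc_eq by blast
  qed simp
  then show ?thesis using in_codes sum by blast
qed

text \<open>Keeping from each pair of conjugates only the one with the smaller index retains at
  least half of the indices.\<close>

lemma exists_half_without_conjugates:
  fixes f :: "nat \<Rightarrow> 'b" and \<sigma> :: "'b \<Rightarrow> 'b"
  assumes inj: "inj_on f {..<n}" and invol: "\<And>x. \<sigma> (\<sigma> x) = x"
  shows "\<exists>S\<subseteq>{..<n}. n \<le> 2 * card S \<and> (\<forall>t\<in>S. \<forall>t'\<in>S. f t = \<sigma> (f t') \<longrightarrow> t = t')"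
proof -
  define S where "S = {t. t < n \<and> (\<forall>t'<t. f t' \<noteq> \<sigma> (f t))}"
  have free: "\<forall>t\<in>S. \<forall>t'\<in>S. f t = \<sigma> (f t') \<longrightarrow> t = t'"
    using invol by (auto simp: S_def) (metis linorder_neqE_nat)
  define R where "R = {..<n} - S"
  have "\<exists>t'. t' < t \<and> f t' = \<sigma> (f t)" if "t \<in> R" for t
    using that by (auto simp: R_def S_def)
  then obtain p where p: "\<And>t. t \<in> R \<Longrightarrow> p t < t \<and> f (p t) = \<sigma> (f t)" by metis
  have "p ` R \<subseteq> S"
  proof
    fix x
    assume "x \<in> p ` R"
    then obtain t where t: "t \<in> R" "x = p t" by blast
    then have "t < n" by (simp add: R_def)
    have "f t' \<noteq> \<sigma> (f x)" if "t' < x" for t'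
      using p[OF t(1)] t(2) that \<open>t < n\<close> inj invol by (metis inj_on_contraD lessThan_iff less_trans
          less_irrefl)
    then show "x \<in> S" using p[OF t(1)] t(2) \<open>t < n\<close> by (simp add: S_def)
  qed
  moreover have "inj_on p R"
  proof (rule inj_onI)
    fix t t'
    assume "t \<in> R" "t' \<in> R" "p t = p t'"
    then have "\<sigma> (f t) = \<sigma> (f t')" using p by metis
    then have "f t = f t'" using invol by metis
    then show "t = t'" using inj \<open>t \<in> R\<close> \<open>t' \<in> R\<close> by (auto simp: R_def inj_on_def)
  qed
  moreover have "S \<subseteq> {..<n}" by (auto simp: S_def)
  ultimately have "card R \<le> card S" "card R = n - card S" "card S \<le> n"
    using card_inj_on_le[of p R S] card_mono[of "{..<n}" S]
    by (auto simp: R_def card_Diff_subset finite_subset)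
  then show ?thesis using \<open>S \<subseteq> {..<n}\<close> free by (intro exI[of _ S]) auto
qed

lemma exists_enumeration_without_conjugates:
  fixes f :: "nat \<Rightarrow> 'b" and \<sigma> :: "'b \<Rightarrow> 'b"
  assumes "inj_on f {..<n}" "\<And>x. \<sigma> (\<sigma> x) = x"
  obtains M e where "n \<le> 2 * M"
    "\<And>i i'. i < M \<Longrightarrow> i' < M \<Longrightarrow> f (e i) = f (e i') \<or> f (e i) = \<sigma> (f (e i')) \<Longrightarrow> i = i'"
proof -
  obtain S where S: "S \<subseteq> {..<n}" "n \<le> 2 * card S"
    and free: "\<forall>t\<in>S. \<forall>t'\<in>S. f t = \<sigma> (f t') \<longrightarrow> t = t'"
    using exists_half_without_conjugates[OF assms] by blast
  obtain e where e: "bij_betw e {..<card S} S"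
    using ex_bij_betw_nat_finite[of S] S(1) finite_subset by (auto simp: atLeast0LessThan)
  have eS: "e i \<in> S" if "i < card S" for i using e that by (auto simp: bij_betw_def)
  show ?thesis
  proof (rule that[of "card S" e])
    show "n \<le> 2 * card S" by (rule S(2))
    show "i = i'" if "i < card S" "i' < card S" "f (e i) = f (e i') \<or> f (e i) = \<sigma> (f (e i'))"
      for i i'
    proof -
      have "e i = e i'"
        using that(3) eS[OF that(1)] eS[OF that(2)] free inj_onD[OF assms(1)] S(1) by blast
      then show "i = i'" using e that(1,2) by (auto simp: bij_betw_def dest: inj_onD)
    qed
  qed
qed

lemma card_funs_vanishing_outside:
  fixes A :: "nat \<Rightarrow> 'b::zero set"
  assumes "\<And>i. i < M \<Longrightarrow> finite (A i)"
  defines "V \<equiv> {c. (\<forall>i<M. c i \<in> A i) \<and> (\<forall>i\<ge>M. c i = 0)}"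
  shows "finite V" and "card V = (\<Prod>i<M. card (A i))"
proof -
  have "bij_betw (\<lambda>c. restrict c {..<M}) V (PiE {..<M} A)"
    by (rule bij_betw_byWitness[where f' = "\<lambda>f i. if i < M then f i else 0"])
      (auto simp: V_def fun_eq_iff PiE_def extensional_def)
  moreover have "finite (PiE {..<M} A)" using assms(1) by (intro finite_PiE) auto
  ultimately show "finite V" "card V = (\<Prod>i<M. card (A i))"
    by (auto simp: bij_betw_finite bij_betw_same_card card_PiE)
qed

lemma card_Fn: "card (Fn n :: (nat \<Rightarrow> 'a::{zero,finite}) set) = CARD('a) ^ n"
  and finite_Fn: "finite (Fn n :: (nat \<Rightarrow> 'a::{zero,finite}) set)"
proof -
  have "Fn n = {c :: nat \<Rightarrow> 'a. (\<forall>i<n. c i \<in> UNIV) \<and> (\<forall>i\<ge>n. c i = 0)}" by (auto simp: Fn_def)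
  then show "card (Fn n :: (nat \<Rightarrow> 'a) set) = CARD('a) ^ n" "finite (Fn n :: (nat \<Rightarrow> 'a) set)"
    using card_funs_vanishing_outside[of n "\<lambda>_. UNIV :: 'a set"] by simp_all
qed

lemma inj_on_sum_if_independent:
  fixes C :: "nat \<Rightarrow> (nat \<Rightarrow> 'a::field) set"
  assumes "\<And>i. i < M \<Longrightarrow> VS.subspace (C i)"
    and indep: "\<And>c. \<forall>i<M. c i \<in> C i \<Longrightarrow> (\<Sum>i<M. c i) = 0 \<Longrightarrow> \<forall>i<M. c i = 0"
  shows "inj_on (\<lambda>c. \<Sum>i<M. c i) {c. (\<forall>i<M. c i \<in> C i) \<and> (\<forall>i\<ge>M. c i = 0)}"
proof (rule inj_onI)
  fix c c'
  assume c: "c \<in> {c. (\<forall>i<M. c i \<in> C i) \<and> (\<forall>i\<ge>M. c i = 0)}"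
    and c': "c' \<in> {c. (\<forall>i<M. c i \<in> C i) \<and> (\<forall>i\<ge>M. c i = 0)}"
    and "(\<Sum>i<M. c i) = (\<Sum>i<M. c' i)"
  then have "\<forall>i<M. c i - c' i = 0"
    using indep[of "\<lambda>i. c i - c' i"] assms(1) by (auto simp: sum_subtractf VS.subspace_diff)
  show "c = c'"
  proof
    fix i
    show "c i = c' i" using \<open>\<forall>i<M. c i - c' i = 0\<close> c c' by (cases "i < M") auto
  qed
qed

lemma unique_decomposition_if_independent:
  fixes C :: "nat \<Rightarrow> (nat \<Rightarrow> 'a::{field,finite}) set"
  assumes sub: "\<And>i. i < M \<Longrightarrow> VS.subspace (C i)" "\<And>i. i < M \<Longrightarrow> C i \<subseteq> Fn n"
    and indep: "\<And>c. \<forall>i<M. c i \<in> C i \<Longrightarrow> (\<Sum>i<M. c i) = 0 \<Longrightarrow> \<forall>i<M. c i = 0"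
    and card: "CARD('a) ^ n \<le> (\<Prod>i<M. card (C i))"
  shows "\<forall>v\<in>Fn n. \<exists>!c. (\<forall>i<M. c i \<in> C i) \<and> (\<forall>i\<ge>M. c i = 0) \<and> v = (\<Sum>i<M. c i)"
proof -
  define V where "V = {c. (\<forall>i<M. c i \<in> C i) \<and> (\<forall>i\<ge>M. c i = 0)}"
  let ?F = "\<lambda>c. \<Sum>i<M. c i"
  have inj: "inj_on ?F V"
    unfolding V_def by (rule inj_on_sum_if_independent[OF sub(1) indep])
  have "\<And>i. i < M \<Longrightarrow> finite (C i)" using sub(2) finite_Fn finite_subset by metis
  then have "card (Fn n :: (nat \<Rightarrow> 'a) set) \<le> card (?F ` V)"
    using card card_funs_vanishing_outside[of M C] inj by (simp add: card_Fn card_image V_def)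
  moreover have "?F ` V \<subseteq> Fn n"
    using sub(2) by (auto simp: V_def intro!: VS.subspace_sum[OF Fn_subspace])
  ultimately have "?F ` V = Fn n"
    using finite_Fn by (metis card_seteq)
  show ?thesis
  proof
    fix v :: "nat \<Rightarrow> 'a"
    assume "v \<in> Fn n"
    then obtain c where c: "c \<in> V" "v = ?F c" using \<open>?F ` V = Fn n\<close> by blast
    show "\<exists>!c. (\<forall>i<M. c i \<in> C i) \<and> (\<forall>i\<ge>M. c i = 0) \<and> v = (\<Sum>i<M. c i)"
    proof (rule ex1I[of _ c])
      show "(\<forall>i<M. c i \<in> C i) \<and> (\<forall>i\<ge>M. c i = 0) \<and> v = (\<Sum>i<M. c i)"
        using c by (simp add: V_def)
      fix c'
      assume "(\<forall>i<M. c' i \<in> C i) \<and> (\<forall>i\<ge>M. c' i = 0) \<and> v = (\<Sum>i<M. c' i)"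
      then have "c' \<in> V" "?F c' = ?F c" using c by (auto simp: V_def)
      then show "c' = c" using inj \<open>c \<in> V\<close> by (auto dest: inj_onD)
    qed
  qed
qed

lemma direct_sum_of_ext2_codes:
  fixes D :: "nat \<Rightarrow> 'a::{field,finite} ext2"
  assumes "2 \<le> n" "d 0 \<noteq> 0" "n \<le> 2 * M"
    and D: "\<And>i. i < M \<Longrightarrow> D i \<notin> range of_base" "\<And>i. i < M \<Longrightarrow> D i ^ n = of_base (\<Prod>t<n. d t)"
    and distinct: "\<And>i i'. i < M \<Longrightarrow> i' < M \<Longrightarrow> D i = D i' \<or> D i = ext2_conj (D i') \<Longrightarrow> i = i'"
  shows "\<forall>v\<in>Fn n. \<exists>!c. (\<forall>i<M. c i \<in> ext2_code n d (D i)) \<and> (\<forall>i\<ge>M. c i = 0) \<and> v = (\<Sum>i<M. c i)"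
proof (rule unique_decomposition_if_independent)
  show "VS.subspace (ext2_code n d (D i))" for i by (rule ext2_code_subspace)
  show "ext2_code n d (D i) \<subseteq> Fn n" for i by (auto simp: ext2_code_def ext2_codeword_in_Fn)
  show "\<forall>i<M. c i = 0" if "\<forall>i<M. c i \<in> ext2_code n d (D i)" "(\<Sum>i<M. c i) = 0" for c
    by (rule ext2_codes_independent[OF assms(1,2) D distinct that])
  have "card (ext2_code n d (D i)) = CARD('a) ^ 2" if "i < M" for i
    using ext2_codeword_inj[of n d "D i"] assms(1,2) D(1)[OF that]
    by (simp add: ext2_code_def card_image card_ext2)
  then have "(\<Prod>i<M. card (ext2_code n d (D i))) = CARD('a) ^ (2 * M)"
    by (simp add: power_mult)
  moreover have "CARD('a) ^ n \<le> CARD('a) ^ (2 * M)"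
    using assms(3) by (intro power_increasing) auto
  ultimately show "CARD('a) ^ n \<le> (\<Prod>i<M. card (ext2_code n d (D i)))" by simp
qed

section \<open>Codes for the matrix A\<close>

lemma generator_for_matA:
  fixes eta lam :: "'a::{field,finite}"
  assumes "eta \<noteq> 0" "lam \<noteq> 0"
    and "{eta ^ i * lam ^ j | i j. True} = {x. x \<noteq> 0}"
    and "odd (mult_ord lam)" "\<exists>e. mult_ord eta = 2 ^ e"
  obtains g :: "'a ext2" and j where "g \<noteq> 0" "\<And>x. x \<noteq> 0 \<Longrightarrow> \<exists>i. x = g ^ i"
    and "of_base (\<Prod>t<CARD('a) + 1. matD_diag eta lam t) = g ^ ((CARD('a) + 1) * j)"
    and "coprime j (CARD('a) - 1)"
proof -
  let ?c = "\<Prod>t<CARD('a) + 1. matD_diag eta lam t"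
  have "?c = eta ^ (CARD('a) + 1 - 1) * lam ^ (CARD('a) + 1)"
    by (rule prod_matD_diag) (use two_le_card[where 'a='a] in simp)
  then have "?c = eta ^ CARD('a) * lam ^ (CARD('a) + 1)" by (simp only: add_diff_cancel_right')
  then have "mult_ord ?c = CARD('a) - 1" "?c \<noteq> 0"
    using mult_ord_eta_lam[OF assms] assms(1,2) by simp_all
  moreover obtain g :: "'a ext2" where "g \<noteq> 0" "\<And>x. x \<noteq> 0 \<Longrightarrow> \<exists>i. x = g ^ i"
    using exists_generator by blast
  ultimately show ?thesis using generator_exponent_of_base that by metis
qed

lemma matA_code_of_generator_power:
  fixes eta lam :: "'a::{field,finite}" and g :: "'a ext2"
  assumes "eta \<noteq> 0" "lam \<noteq> 0" "g \<noteq> 0" "\<And>x. x \<noteq> 0 \<Longrightarrow> \<exists>i. x = g ^ i"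
    and "of_base (\<Prod>t<CARD('a) + 1. matD_diag eta lam t) = g ^ ((CARD('a) + 1) * j)"
    and "coprime (j + (CARD('a) - 1) * u) ((CARD('a) + 1) * (CARD('a) - 1))"
  defines "C \<equiv> ext2_code (CARD('a) + 1) (matD_diag eta lam) (g ^ (j + (CARD('a) - 1) * u))"
  shows "faithful_code (CARD('a) + 1) (matA (CARD('a) + 1) eta lam) C"
    and "irreducible_code (CARD('a) + 1) 2 (matA (CARD('a) + 1) eta lam) C"
proof -
  have "matD_diag eta lam t \<noteq> 0" for t using assms(1,2) by (simp add: matD_diag_def)
  then show "faithful_code (CARD('a) + 1) (matA (CARD('a) + 1) eta lam) C"
    and "irreducible_code (CARD('a) + 1) 2 (matA (CARD('a) + 1) eta lam) C"
    unfolding C_def matA_eq_shift_mat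
    using ext2_code_of_primitive_root generator_power_norm[OF assms(3-6)] by blast+
qed

lemma exists_faithful_irreducible_code:
  fixes eta lam :: "'a::{field,finite}"
  assumes "eta \<noteq> 0" "lam \<noteq> 0"
    and "{eta ^ i * lam ^ j | i j. True} = {x. x \<noteq> 0}"
    and "odd (mult_ord lam)" "\<exists>e. mult_ord eta = 2 ^ e"
    and "prime r" "odd r" "CARD('a) + 1 = 2 ^ s * r ^ t"
  shows "\<exists>C. faithful_code (CARD('a) + 1) (matA (CARD('a) + 1) eta lam) C \<and>
    irreducible_code (CARD('a) + 1) 2 (matA (CARD('a) + 1) eta lam) C"
proof -
  obtain g :: "'a ext2" and j where g: "g \<noteq> 0" "\<And>x. x \<noteq> 0 \<Longrightarrow> \<exists>i. x = g ^ i"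
    and j: "of_base (\<Prod>t<CARD('a) + 1. matD_diag eta lam t) = g ^ ((CARD('a) + 1) * j)"
      "coprime j (CARD('a) - 1)"
    using generator_for_matA[OF assms(1-5)] by blast
  obtain u where "coprime (j + (CARD('a) - 1) * u) ((CARD('a) + 1) * (CARD('a) - 1))"
    using exists_coprime_shift[OF two_le_card j(2) assms(8,6,7)] by blast
  then show ?thesis
    using matA_code_of_generator_power[OF assms(1,2) g j(1)] by blast
qed

lemma exists_direct_sum_of_faithful_irreducible_codes:
  fixes eta lam :: "'a::{field,finite}"
  assumes "eta \<noteq> 0" "lam \<noteq> 0"
    and "{eta ^ i * lam ^ j | i j. True} = {x. x \<noteq> 0}"
    and "odd (mult_ord lam)" "\<exists>e. mult_ord eta = 2 ^ e"
    and "CARD('a) + 1 = 2 ^ m"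
  shows "\<exists>(Cs :: nat \<Rightarrow> (nat \<Rightarrow> 'a) set) M.
    (\<forall>i<M. faithful_code (CARD('a) + 1) (matA (CARD('a) + 1) eta lam) (Cs i) \<and>
           irreducible_code (CARD('a) + 1) 2 (matA (CARD('a) + 1) eta lam) (Cs i)) \<and>
    (\<forall>v\<in>Fn (CARD('a) + 1). \<exists>!c.
       (\<forall>i<M. c i \<in> Cs i) \<and> (\<forall>i\<ge>M. c i = 0) \<and> v = (\<Sum>i<M. c i))"
proof -
  let ?q = "CARD('a)"
  let ?n = "?q + 1" and ?d = "matD_diag eta lam"
  have q: "2 \<le> ?q" by (rule two_le_card)
  obtain g :: "'a ext2" and j where g: "g \<noteq> 0" "\<And>x. x \<noteq> 0 \<Longrightarrow> \<exists>i. x = g ^ i"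
    and j: "of_base (\<Prod>t<?n. ?d t) = g ^ (?n * j)" "coprime j (?q - 1)"
    using generator_for_matA[OF assms(1-5)] by blast
  define G where "G u = g ^ (j + (?q - 1) * u)" for u
  have cop: "coprime (j + (?q - 1) * u) (?n * (?q - 1))" for u
    using coprime_shift_if_Suc_pow_2[OF q j(2) assms(6)] .
  note G_root = generator_power_norm[OF g j(1) cop, folded G_def]
  have "inj_on G {..<?n}"
    unfolding G_def using g mult_ord_generator[OF g] card_ext2_minus_1
    by (intro inj_on_power_progression) (auto simp: mult.commute)
  then obtain M e where M: "?n \<le> 2 * M"
    and distinct: "\<And>i i'. i < M \<Longrightarrow> i' < M \<Longrightarrow> G (e i) = G (e i') \<or> G (e i) = ext2_conj (G (e i'))
      \<Longrightarrow> i = i'"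
    using exists_enumeration_without_conjugates[of G ?n ext2_conj] by auto
  define D where "D i = G (e i)" for i
  have D_base: "D i \<notin> range of_base" for i
    unfolding D_def by (rule not_of_base_if_primitive[OF G_root(1,2)])
  have D_root: "D i ^ ?n = of_base (\<Prod>t<?n. ?d t)" for i
    unfolding D_def by (rule G_root(3))
  have "2 \<le> ?n" "?d 0 \<noteq> 0" using q assms(1,2) by (simp_all add: matD_diag_def)
  from direct_sum_of_ext2_codes[OF this M D_base D_root distinct[folded D_def]]
  have "\<forall>v\<in>Fn ?n. \<exists>!c. (\<forall>i<M. c i \<in> ext2_code ?n ?d (D i)) \<and>
      (\<forall>i\<ge>M. c i = 0) \<and> v = (\<Sum>i<M. c i)" .
  moreover have "faithful_code ?n (matA ?n eta lam) (ext2_code ?n ?d (D i)) \<and>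
      irreducible_code ?n 2 (matA ?n eta lam) (ext2_code ?n ?d (D i))" for i
    unfolding D_def G_def using matA_code_of_generator_power[OF assms(1,2) g j(1) cop] by blast
  ultimately show ?thesis
    by (intro exI[of _ "\<lambda>i. ext2_code ?n ?d (D i)"] exI[of _ M]) blast
qed

text \<open>The hypotheses \<open>q = p^f\<close> with \<open>p\<close> prime are automatic for a finite field and not needed;
  of \<open>q\<close> being a Mersenne prime only \<open>q + 1 = 2^m\<close> is used.\<close>

theorem theorem5p3:
  fixes eta lam :: "'a::{field,finite}"
    and p f s t r :: nat
  assumes q_pow: "CARD('a) = p ^ f" and p_prime: "prime p" and f_pos: "f \<ge> 1"
    and eta_nz: "eta \<noteq> 0" and lam_nz: "lam \<noteq> 0"
    and gen: "{eta ^ i * lam ^ j | i j. True} = {x::'a. x \<noteq> 0}"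
    and lam_odd: "odd (mult_ord lam)"
    and eta_2pow: "\<exists>e. mult_ord eta = 2 ^ e"
    and r_prime: "prime r" and r_odd: "odd r"
    and n_fact: "CARD('a) + 1 = 2 ^ s * r ^ t"
  shows "(\<exists>C. faithful_code (CARD('a) + 1) (matA (CARD('a) + 1) eta lam) C \<and>
              irreducible_code (CARD('a) + 1) 2 (matA (CARD('a) + 1) eta lam) C)
    \<and> ((prime (CARD('a)) \<and> (\<exists>m. CARD('a) = 2 ^ m - 1)) \<longrightarrow>
         (\<exists>(Cs :: nat \<Rightarrow> (nat \<Rightarrow> 'a) set) m.
            (\<forall>i<m. faithful_code (CARD('a) + 1) (matA (CARD('a) + 1) eta lam) (Cs i) \<and>
                   irreducible_code (CARD('a) + 1) 2 (matA (CARD('a) + 1) eta lam) (Cs i)) \<and>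
            (\<forall>v\<in>Fn (CARD('a) + 1). \<exists>!c :: nat \<Rightarrow> nat \<Rightarrow> 'a.
                (\<forall>i<m. c i \<in> Cs i) \<and> (\<forall>i\<ge>m. c i = 0) \<and> v = (\<Sum>i<m. c i))))"
proof (intro conjI impI)
  show "\<exists>C. faithful_code (CARD('a) + 1) (matA (CARD('a) + 1) eta lam) C \<and>
      irreducible_code (CARD('a) + 1) 2 (matA (CARD('a) + 1) eta lam) C"
    by (rule exists_faithful_irreducible_code[OF eta_nz lam_nz gen lam_odd eta_2pow r_prime r_odd n_fact])
  assume "prime (CARD('a)) \<and> (\<exists>m. CARD('a) = 2 ^ m - 1)"
  then obtain m where "CARD('a) + 1 = 2 ^ m" by (metis le_add_diff_inverse2 one_le_numeral one_le_power)
  then show "\<exists>(Cs :: nat \<Rightarrow> (nat \<Rightarrow> 'a) set) m.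
      (\<forall>i<m. faithful_code (CARD('a) + 1) (matA (CARD('a) + 1) eta lam) (Cs i) \<and>
             irreducible_code (CARD('a) + 1) 2 (matA (CARD('a) + 1) eta lam) (Cs i)) \<and>
      (\<forall>v\<in>Fn (CARD('a) + 1). \<exists>!c :: nat \<Rightarrow> nat \<Rightarrow> 'a.
          (\<forall>i<m. c i \<in> Cs i) \<and> (\<forall>i\<ge>m. c i = 0) \<and> v = (\<Sum>i<m. c i))"
    by (rule exists_direct_sum_of_faithful_irreducible_codes[OF eta_nz lam_nz gen lam_odd eta_2pow])
qed

end
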